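(* The elements of $\mathcal{R}$ with small support generate $\mathcal{R}$, and $\mathcal{R}=[\mathcal{R},\mathcal{R}]$.
   Context: $\mathcal{R}$ is the group of rational homeomorphisms of $\{0,1\}^\omega$: those $f$ for which there is a finite asynchronous binary transducer $(S,s_0,t,o)$ ($S$ finite, $t\colon S\times\{0,1\}\to S$, $o\colon S\times\{0,1\}\to\{0,1\}^*$) with $f(\psi)=o(s_0,\psi)$, where for $\sigma_1\sigma_2\cdots$ one sets $s_1=s_0$, $s_{n+1}=t(s_n,\sigma_n)$ and $o(s_0,\sigma_1\sigma_2\cdots)=o(s_1,\sigma_1)o(s_2,\sigma_2)\cdots$. An element $f$ has small support if there is a proper nonempty clopen subset $E\subseteq\{0,1\}^\omega$ such that $f$ is the identity on the complement of $E$. *)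

theory Defs
  imports "HOL-Analysis.Analysis" "HOL-Algebra.Algebra"
begin

text \<open>Cantor space {0,1}^omega is modelled as nat => bool (False = 0, True = 1)
  with the product topology (instance from Function_Topology; bool carries the discrete
  order topology).\<close>

type_synonym cantor = "nat \<Rightarrow> bool"

text \<open>A finite asynchronous binary transducer: states are the naturals below k,
  start state s0, transition t, output o (finite binary words = bool lists).\<close>

fun trans_state :: "(nat \<Rightarrow> bool \<Rightarrow> nat) \<Rightarrow> nat \<Rightarrow> cantor \<Rightarrow> nat \<Rightarrow> nat" where
  "trans_state t s0 x 0 = s0"
| "trans_state t s0 x (Suc n) = t (trans_state t s0 x n) (x n)"

definition trans_out_prefix ::
  "(nat \<Rightarrow> bool \<Rightarrow> nat) \<Rightarrow> (nat \<Rightarrow> bool \<Rightarrow> bool list) \<Rightarrow> nat \<Rightarrow> cantor \<Rightarrow> nat \<Rightarrow> bool list" where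
  "trans_out_prefix t out s0 x n = concat (map (\<lambda>i. out (trans_state t s0 x i) (x i)) [0..<n])"

text \<open>The infinite word o(s0,x) equals y: every finite partial output is a prefix of y
  and the partial outputs have unbounded length (so the output is an infinite word).\<close>
definition trans_output_is ::
  "(nat \<Rightarrow> bool \<Rightarrow> nat) \<Rightarrow> (nat \<Rightarrow> bool \<Rightarrow> bool list) \<Rightarrow> nat \<Rightarrow> cantor \<Rightarrow> cantor \<Rightarrow> bool" where
  "trans_output_is t out s0 x y \<longleftrightarrow>
     (\<forall>n. \<forall>i < length (trans_out_prefix t out s0 x n). trans_out_prefix t out s0 x n ! i = y i)
   \<and> (\<forall>m. \<exists>n. m \<le> length (trans_out_prefix t out s0 x n))"

definition rational_map :: "(cantor \<Rightarrow> cantor) \<Rightarrow> bool" where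
  "rational_map f \<longleftrightarrow>
     (\<exists>(k::nat) (s0::nat) t out. s0 < k \<and> (\<forall>s < k. \<forall>a. t s a < k)
        \<and> (\<forall>x. trans_output_is t out s0 x (f x)))"

definition rational_homeos :: "(cantor \<Rightarrow> cantor) set" where
  "rational_homeos = {f. (\<exists>g. homeomorphism UNIV UNIV f g) \<and> rational_map f}"

definition RG :: "(cantor \<Rightarrow> cantor) monoid" where
  "RG = \<lparr>carrier = rational_homeos, mult = (\<circ>), one = id\<rparr>"

definition small_support :: "(cantor \<Rightarrow> cantor) \<Rightarrow> bool" where
  "small_support f \<longleftrightarrow>
     (\<exists>E :: cantor set. open E \<and> closed E \<and> E \<noteq> {} \<and> E \<noteq> UNIV \<and> (\<forall>x. x \<notin> E \<longrightarrow> f x = x))"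

end

theory Submission
  imports Defs
begin

text \<open>
  Rational maps are those computed by asynchronous transducers with finitely many reachable
  states. They are closed under composition, and the inverse \<open>g\<close> of a rational homeomorphism
  \<open>f\<close> is rational too: it is computed by the transducer whose state after reading \<open>u\<close> is the
  residual \<open>\<eta> \<mapsto> g (u \<eta>)\<close> with the longest common prefix of \<open>g [u]\<close> cut off. Only
  finitely many residuals occur, since each is the inverse of the tail map of \<open>f\<close> at one of
  its finitely many states, preceded by a word of bounded length.

  An \<open>f \<noteq> id\<close> moves some cylinder \<open>V\<close> off itself. The involution \<open>h\<close> that is \<open>f\<close> on \<open>V\<close>,
  \<open>f\<^sup>-\<^sup>1\<close> on \<open>f V\<close> and the identity elsewhere has small support, and so has \<open>h f\<close>, which
  fixes \<open>V\<close>; thus \<open>f = h (h f)\<close>.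

  Let \<open>\<sigma>\<close> map \<open>0x \<mapsto> 00x\<close>, \<open>10x \<mapsto> 01x\<close>, \<open>11x \<mapsto> 1x\<close>. If \<open>H\<close> is supported in the
  cylinder \<open>[01]\<close> and \<open>\<Phi> H = after_zeros H\<close> acts as \<open>H\<close> behind every block of leading zeros,
  \<open>0\<^sup>k01x \<mapsto> 0\<^sup>k H (01x)\<close>, then \<open>\<Phi> H \<sigma> (\<Phi> H)\<^sup>-\<^sup>1 \<sigma>\<^sup>-\<^sup>1 = H\<close>. An element of small
  support fixes some cylinder \<open>[u]\<close> pointwise and is conjugate, by a rational homeomorphism
  taking the complement of \<open>[u]\<close> into \<open>[01]\<close>, to such an \<open>H\<close>. So all elements of small
  support, and hence all elements, lie in the normal subgroup \<open>[\<R>, \<R>]\<close>.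
\<close>

section \<open>Finite prefixes and cylinders\<close>

definition agree :: "nat \<Rightarrow> cantor \<Rightarrow> cantor \<Rightarrow> bool" where
  "agree n x y \<longleftrightarrow> (\<forall>i<n. x i = y i)"

definition take_seq :: "cantor \<Rightarrow> nat \<Rightarrow> bool list" where
  "take_seq x n = map x [0..<n]"

definition prefix_of :: "bool list \<Rightarrow> cantor \<Rightarrow> bool" where
  "prefix_of l y \<longleftrightarrow> (\<forall>i<length l. l ! i = y i)"

definition prepend :: "bool list \<Rightarrow> cantor \<Rightarrow> cantor" where
  "prepend w \<eta> = (\<lambda>i. if i < length w then w ! i else \<eta> (i - length w))"

definition shift :: "nat \<Rightarrow> cantor \<Rightarrow> cantor" where
  "shift k x = (\<lambda>i. x (i + k))"

definition zeros :: cantor where "zeros = (\<lambda>_. False)"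

lemma take_seq_Suc: "take_seq x (Suc n) = take_seq x n @ [x n]"
  by (simp add: take_seq_def)

lemma length_take_seq[simp]: "length (take_seq x n) = n"
  by (simp add: take_seq_def)

lemma take_seq_0[simp]: "take_seq x 0 = []"
  by (simp add: take_seq_def)

lemma nth_take_seq[simp]: "i < n \<Longrightarrow> take_seq x n ! i = x i"
  by (simp add: take_seq_def)

lemma take_seq_add: "take_seq x (L + k) = take_seq x L @ take_seq (shift L x) k"
  by (auto simp: list_eq_iff_nth_eq nth_append shift_def)

lemma take_seq_Suc_Cons: "take_seq x (Suc m) = x 0 # take_seq (shift 1 x) m"
  by (simp add: list_eq_iff_nth_eq nth_Cons shift_def split: nat.split)

lemma take_seq_replicate: "(\<forall>i<n. \<not> x i) \<Longrightarrow> take_seq x n = replicate n False"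
  by (simp add: list_eq_iff_nth_eq)

lemma take_seq_le_append: assumes "m \<le> m'" shows "\<exists>w. take_seq y m' = take_seq y m @ w"
proof -
  have "[0..<m'] = [0..<m] @ [m..<m']" using upt_add_eq_append[of 0 m "m'-m"] assms by simp
  then have "take_seq y m' = take_seq y m @ map y [m..<m']" by (simp add: take_seq_def)
  then show ?thesis by blast
qed

lemma prefix_of_take_seq: "prefix_of l y \<Longrightarrow> l = take_seq y (length l)"
  by (simp add: prefix_of_def list_eq_iff_nth_eq)

lemma prefix_of_take_seq_self: "prefix_of (take_seq y n) y"
  by (simp add: prefix_of_def)

lemma prefix_of_Nil[simp]: "prefix_of [] y"
  by (simp add: prefix_of_def)

lemma prefix_of_append: assumes "prefix_of (l1 @ l2) y" shows "prefix_of l2 (shift (length l1) y)"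
  unfolding prefix_of_def shift_def
proof (intro allI impI)
  fix i assume "i < length l2"
  then have "length l1 + i < length (l1 @ l2)" by simp
  then have "(l1 @ l2) ! (length l1 + i) = y (length l1 + i)" using assms unfolding prefix_of_def by blast
  moreover have "(l1 @ l2) ! (length l1 + i) = l2 ! i" by (rule nth_append_length_plus)
  ultimately show "l2 ! i = y (i + length l1)" by (metis add.commute)
qed

lemma prefix_of_prepend_append: "prefix_of l2 y \<Longrightarrow> prefix_of (l1 @ l2) (prepend l1 y)"
  by (auto simp: prefix_of_def nth_append prepend_def)

lemma prepend_lt[simp]: "i < length w \<Longrightarrow> prepend w \<eta> i = w ! i"
  by (simp add: prepend_def)

lemma prepend_ge[simp]: "prepend w \<eta> (length w + i) = \<eta> i"
  by (simp add: prepend_def)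

lemma shift_prepend[simp]: "shift (length w) (prepend w \<eta>) = \<eta>"
  by (simp add: shift_def prepend_def fun_eq_iff)

lemma shift_nth: "shift k x i = x (i + k)"
  by (simp add: shift_def)

lemma prepend_Nil[simp]: "prepend [] \<eta> = \<eta>"
  by (simp add: prepend_def)

lemma shift_0[simp]: "shift 0 x = x"
  by (simp add: shift_def)

lemma prepend_append: "prepend (v @ w) \<eta> = prepend v (prepend w \<eta>)"
  by (auto simp: prepend_def fun_eq_iff nth_append)

lemma shift_shift: "shift a (shift b y) = shift (a + b) y"
  by (simp add: shift_def ac_simps)

lemma prepend_take_seq_shift: "prepend (take_seq y n) (shift n y) = y"
  by (auto simp: prepend_def shift_def fun_eq_iff)

lemma prefix_of_prepend_shift: "prefix_of l y \<Longrightarrow> prepend l (shift (length l) y) = y"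
  by (metis prepend_take_seq_shift prefix_of_take_seq)

lemma take_seq_prepend: "take_seq (prepend w \<xi>) (length w + n) = w @ take_seq \<xi> n"
  by (auto simp: list_eq_iff_nth_eq nth_append prepend_def)

lemma take_seq_prepend_len: "take_seq (prepend w \<xi>) (length w) = w"
  using take_seq_prepend[of w \<xi> 0] by simp

lemma prepend_inj: assumes "prepend w a = prepend w b" shows "a = b"
proof -
  have "shift (length w) (prepend w a) = shift (length w) (prepend w b)" using assms by simp
  then show ?thesis by simp
qed

lemma prepend_singleton_nth: "prepend [a] y 0 = a" "prepend [a] y (Suc i) = y i"
  by (simp_all add: prepend_def)

lemma prepend_pair_nth: "prepend [a, b] y 0 = a" "prepend [a, b] y (Suc 0) = b" "prepend [a, b] y (Suc (Suc i)) = y i"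
  by (simp_all add: prepend_def)

lemma cantor_eq_by_cases:
  fixes p q :: cantor
  assumes "p 0 = q 0" "p (Suc 0) = q (Suc 0)" "\<And>i. p (Suc (Suc i)) = q (Suc (Suc i))"
  shows "p = q"
proof (rule ext)
  fix i show "p i = q i"
    using assms by (cases i; cases "i - 1") auto
qed

lemma prepend_replicate_Suc: "prepend [False] (prepend (replicate j False) y) = prepend (replicate (Suc j) False) y"
  by (simp add: prepend_append[symmetric])

lemma agree_iff_take_seq: "agree n x y \<longleftrightarrow> take_seq x n = take_seq y n"
  by (auto simp: agree_def take_seq_def)

lemma agree_shift: "agree (L + m) p q \<longleftrightarrow> agree L p q \<and> agree m (shift L p) (shift L q)"
proof
  assume "agree (L + m) p q" then show "agree L p q \<and> agree m (shift L p) (shift L q)"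
    by (auto simp: agree_def shift_def)
next
  assume a: "agree L p q \<and> agree m (shift L p) (shift L q)"
  show "agree (L + m) p q" unfolding agree_def
  proof (intro allI impI)
    fix i assume "i < L + m"
    show "p i = q i"
    proof (cases "i < L")
      case True then show ?thesis using a by (simp add: agree_def)
    next
      case False
      then have "i - L < m" "i = (i - L) + L" using \<open>i < L + m\<close> by auto
      then show ?thesis using a unfolding agree_def shift_def by metis
    qed
  qed
qed

lemma agree_mono: "agree n x y \<Longrightarrow> m \<le> n \<Longrightarrow> agree m x y"
  by (simp add: agree_def)

lemma agree_prepend: "agree k a b \<Longrightarrow> agree (length o' + k) (prepend o' a) (prepend o' b)"
  by (auto simp: agree_def prepend_def)

section \<open>The topology of Cantor space\<close>

lemma open_agree_set: "open {y. agree n x y}"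
proof -
  have "open {f::cantor. \<forall>i\<in>{..<n}. f (id i) \<in> {x i}}"
    by (rule product_topology_basis') (auto simp: open_discrete)
  moreover have "{f::cantor. \<forall>i\<in>{..<n}. f (id i) \<in> {x i}} = {y. agree n x y}"
    by (auto simp: agree_def)
  ultimately show ?thesis by simp
qed

lemma agree_set_subset_open:
  assumes "open U" "x \<in> U" shows "\<exists>n. {y. agree n x y} \<subseteq> U"
proof -
  have "openin (product_topology (\<lambda>i. euclidean) UNIV) U"
    using assms(1) by (simp add: open_fun_def)
  then obtain V where V: "finite {i. V i \<noteq> (UNIV::bool set)}" "x \<in> Pi\<^sub>E UNIV V" "Pi\<^sub>E UNIV V \<subseteq> U"
    using assms(2) unfolding openin_product_topology_alt by force
  obtain n where n: "\<forall>i\<in>{i. V i \<noteq> UNIV}. i < n"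
    using V(1) by (metis finite_nat_set_iff_bounded)
  have "{y. agree n x y} \<subseteq> Pi\<^sub>E UNIV V"
  proof
    fix y assume "y \<in> {y. agree n x y}"
    then have "\<forall>i. y i \<in> V i"
    proof (intro allI)
      fix i assume a: "y \<in> {y. agree n x y}"
      show "y i \<in> V i"
      proof (cases "V i = UNIV")
        case False
        then have "i < n" using n by blast
        then have "y i = x i" using a by (simp add: agree_def)
        then show ?thesis using V(2) by (auto simp: PiE_iff)
      qed simp
    qed
    then show "y \<in> Pi\<^sub>E UNIV V" by (auto simp: PiE_iff)
  qed
  then show ?thesis using V(3) by blast
qed

lemma open_take_seq: "open {y. P (take_seq y n)}"
proof (rule iffD2[OF open_subopen], intro ballI)
  fix y assume y: "y \<in> {y. P (take_seq y n)}"
  have "{z. agree n y z} \<subseteq> {y. P (take_seq y n)}"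
  proof
    fix z assume "z \<in> {z. agree n y z}"
    then have "take_seq y n = take_seq z n" by (simp add: agree_iff_take_seq)
    then show "z \<in> {y. P (take_seq y n)}" using y by simp
  qed
  moreover have "y \<in> {z. agree n y z}" by (simp add: agree_def)
  ultimately show "\<exists>T. open T \<and> y \<in> T \<and> T \<subseteq> {y. P (take_seq y n)}" using open_agree_set by blast
qed

lemma closed_take_seq: "closed {y. P (take_seq y n)}"
proof -
  have "- {y. P (take_seq y n)} = {y. \<not> P (take_seq y n)}" by auto
  then show ?thesis using open_take_seq[of "\<lambda>w. \<not> P w" n] by (simp add: closed_def)
qed

lemma compact_cantor_space: "compact (UNIV :: cantor set)"
proof -
  have "compact_space (euclidean::bool topology)" by (simp add: compact_space_def finite_imp_compact)
  then have "compact_space (product_topology (\<lambda>i::nat. (euclidean :: bool topology)) UNIV)"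
    by (simp add: compact_space_product_topology)
  then show ?thesis
    by (simp add: euclidean_product_topology compact_space_def)
qed

lemma open_vimage_UNIV: "continuous_on UNIV g \<Longrightarrow> open B \<Longrightarrow> open (g -` B)"
  by (metis continuous_on_open_vimage[OF open_UNIV] Int_UNIV_right)

lemma uniformly_continuous_agree:
  assumes "continuous_on UNIV (g :: cantor \<Rightarrow> cantor)"
  shows "\<exists>M. \<forall>x y. agree M x y \<longrightarrow> agree N (g x) (g y)"
proof -
  have "\<exists>m. {y. agree m x y} \<subseteq> {y. agree N (g x) (g y)}" for x
  proof -
    have "open (g -` {z. agree N (g x) z})"
      using assms open_agree_set by (rule open_vimage_UNIV)
    moreover have "x \<in> g -` {z. agree N (g x) z}" by (simp add: agree_def)
    ultimately obtain m where "{y. agree m x y} \<subseteq> g -` {z. agree N (g x) z}"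
      using agree_set_subset_open by blast
    then show ?thesis by auto
  qed
  then obtain m where m: "\<And>x. {y. agree (m x) x y} \<subseteq> {y. agree N (g x) (g y)}" by metis
  have cov: "UNIV \<subseteq> (\<Union>x\<in>UNIV. {y. agree (m x) x y})" by (auto simp: agree_def)
  obtain F where F: "finite F" "UNIV \<subseteq> (\<Union>x\<in>F. {y. agree (m x) x y})"
  proof -
    from compactE_image[OF compact_cantor_space _ cov]
    obtain C' where "C' \<subseteq> UNIV" "finite C'" "UNIV \<subseteq> (\<Union>x\<in>C'. {y. agree (m x) x y})"
      using open_agree_set by blast
    then show ?thesis using that by blast
  qed
  define M where "M = Max (m ` F)"
  show ?thesis
  proof (intro exI allI impI)
    fix x y assume xy: "agree M x y"
    obtain z where z: "z \<in> F" "agree (m z) z x" using F(2) by blast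
    have "m z \<le> M" using F(1) z(1) by (simp add: M_def)
    then have "agree (m z) z y" using xy z(2) by (auto simp: agree_def)
    then have "agree N (g z) (g x)" "agree N (g z) (g y)" using m[of z] z(2) by auto
    then show "agree N (g x) (g y)" by (auto simp: agree_def)
  qed
qed

lemma continuous_on_locally_constant_coords:
  assumes "\<And>x i. \<exists>n. \<forall>y. agree n x y \<longrightarrow> g y i = g x i"
  shows "continuous_on UNIV (g :: cantor \<Rightarrow> cantor)"
proof (rule continuous_on_coordinatewise_then_product)
  fix i
  have "open ((\<lambda>x. g x i) -` B)" for B :: "bool set"
  proof (rule iffD2[OF open_subopen], intro ballI)
    fix x assume x: "x \<in> (\<lambda>x. g x i) -` B"
    obtain n where n: "\<forall>y. agree n x y \<longrightarrow> g y i = g x i" using assms by blast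
    have "{y. agree n x y} \<subseteq> (\<lambda>x. g x i) -` B"
    proof
      fix y assume "y \<in> {y. agree n x y}"
      then have "g y i = g x i" using n by blast
      then show "y \<in> (\<lambda>x. g x i) -` B" using x by simp
    qed
    moreover have "x \<in> {y. agree n x y}" by (simp add: agree_def)
    ultimately show "\<exists>T. open T \<and> x \<in> T \<and> T \<subseteq> (\<lambda>x. g x i) -` B"
      using open_agree_set[of n x] by blast
  qed
  then show "continuous_on UNIV (\<lambda>x. g x i)"
    by (simp add: continuous_on_open_vimage[OF open_UNIV])
qed

section \<open>Transducers with finitely many reachable states\<close>

fun out_word :: "('s \<Rightarrow> bool \<Rightarrow> 's) \<Rightarrow> ('s \<Rightarrow> bool \<Rightarrow> bool list) \<Rightarrow> 's \<Rightarrow> bool list \<Rightarrow> bool list" where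
  "out_word t out s [] = []"
| "out_word t out s (a # v) = out s a @ out_word t out (t s a) v"

definition computes :: "('s \<Rightarrow> bool \<Rightarrow> 's) \<Rightarrow> ('s \<Rightarrow> bool \<Rightarrow> bool list) \<Rightarrow> 's \<Rightarrow> (cantor \<Rightarrow> cantor) \<Rightarrow> bool" where
  "computes t out s f \<longleftrightarrow> (\<forall>x. (\<forall>n. prefix_of (out_word t out s (take_seq x n)) (f x))
      \<and> (\<forall>m. \<exists>n. m \<le> length (out_word t out s (take_seq x n))))"

lemma foldl_in_invariant:
  "s \<in> I \<Longrightarrow> (\<And>q a. q \<in> I \<Longrightarrow> t q a \<in> I) \<Longrightarrow> foldl t s v \<in> I"
  by (induction v arbitrary: s) auto

lemma finite_reach_invariant:
  assumes "finite I" "s \<in> I" "\<And>q a. q \<in> I \<Longrightarrow> t q a \<in> I"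
  shows "finite (range (foldl t s))"
proof (rule finite_subset[OF _ assms(1)])
  show "range (foldl t s) \<subseteq> I"
    using foldl_in_invariant[of s I t, OF assms(2,3)] by blast
qed

lemma range_foldl_step:
  assumes "q \<in> range (foldl t s)"
  shows "t q a \<in> range (foldl t s)"
proof -
  obtain v where "q = foldl t s v" using assms by blast
  then have "t q a = foldl t s (v @ [a])" by simp
  then show ?thesis by (metis rangeI)
qed

lemma out_word_append: "out_word t out s (v @ w) = out_word t out s v @ out_word t out (foldl t s v) w"
  by (induction v arbitrary: s) auto

lemma out_word_snoc: "out_word t out s (v @ [a]) = out_word t out s v @ out (foldl t s v) a"
  by (simp add: out_word_append)

lemma out_word_take_seq_mono: "m \<le> m' \<Longrightarrow> length (out_word t out s (take_seq y m)) \<le> length (out_word t out s (take_seq y m'))"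
  using take_seq_le_append[of m m' y] by (auto simp: out_word_append)

lemma trans_state_eq: "trans_state t s x n = foldl t s (take_seq x n)"
  by (induction n) (simp_all add: take_seq_Suc)

lemma trans_out_prefix_eq: "trans_out_prefix t out s x n = out_word t out s (take_seq x n)"
  by (induction n) (simp_all add: trans_out_prefix_def take_seq_Suc out_word_snoc trans_state_eq)

lemma trans_output_is_eq:
  "trans_output_is t out s x y \<longleftrightarrow> (\<forall>n. prefix_of (out_word t out s (take_seq x n)) y)
      \<and> (\<forall>m. \<exists>n. m \<le> length (out_word t out s (take_seq x n)))"
  by (simp add: trans_output_is_def trans_out_prefix_eq prefix_of_def)

lemma rational_map_computes:
  assumes "rational_map f"
  shows "\<exists>(t :: nat \<Rightarrow> bool \<Rightarrow> nat) out s. finite (range (foldl t s)) \<and> computes t out s f"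
proof -
  obtain k s0 t out where k: "s0 < k" "\<forall>s < k. \<forall>a. t s a < k" "\<forall>x. trans_output_is t out s0 x (f x)"
    using assms unfolding rational_map_def by blast
  have "range (foldl t s0) \<subseteq> {..<k}"
    using foldl_in_invariant[of s0 "{..<k}" t] k(1,2) by auto
  then have "finite (range (foldl t s0))" by (rule finite_subset) simp
  moreover have "computes t out s0 f"
    using k(3) by (simp add: computes_def trans_output_is_eq)
  ultimately show ?thesis by blast
qed

lemma computes_rational_map:
  fixes t :: "'s \<Rightarrow> bool \<Rightarrow> 's"
  assumes fin: "finite (range (foldl t s))" and c: "computes t out s f"
  shows "rational_map f"
proof -
  define R where "R = range (foldl t s)"
  obtain e where e: "bij_betw e R {0..<card R}"
    using ex_bij_betw_finite_nat[of R] fin by (auto simp: R_def)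
  define k where "k = card R"
  define t' where "t' = (\<lambda>i a. e (t (inv_into R e i) a))"
  define out' where "out' = (\<lambda>i a. out (inv_into R e i) a)"
  have inR: "foldl t s v \<in> R" for v by (simp add: R_def)
  have tR: "t q a \<in> R" if "q \<in> R" for q a
    using that unfolding R_def by (rule range_foldl_step)
  have ek: "e q < k" if "q \<in> R" for q
    using e that by (auto simp: k_def bij_betw_def)
  have inv: "inv_into R e (e q) = q" if "q \<in> R" for q
    using e that by (simp add: bij_betw_def)
  have st: "trans_state t' (e s) x n = e (foldl t s (take_seq x n))" for x n
  proof (induction n)
    case 0 show ?case by simp
  next
    case (Suc n)
    then show ?case using inv[OF inR] by (simp add: t'_def take_seq_Suc)
  qed
  have "trans_out_prefix t' out' (e s) x n = out_word t out s (take_seq x n)" for x n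
  proof (induction n)
    case 0 show ?case by (simp add: trans_out_prefix_def)
  next
    case (Suc n)
    have "trans_out_prefix t' out' (e s) x (Suc n) = trans_out_prefix t' out' (e s) x n @ out' (trans_state t' (e s) x n) (x n)"
      by (simp add: trans_out_prefix_def)
    also have "\<dots> = out_word t out s (take_seq x (Suc n))"
      using Suc inv[OF inR] by (simp add: st out'_def take_seq_Suc out_word_snoc)
    finally show ?case .
  qed
  then have "trans_output_is t' out' (e s) x (f x)" for x
    using c by (simp add: trans_output_is_def prefix_of_def computes_def)
  moreover have "e s < k" using ek[of s] inR[of "[]"] by simp
  moreover have "\<forall>i<k. \<forall>a. t' i a < k"
  proof (intro allI impI)
    fix i a assume "i < k"
    then have "i \<in> e ` R" using e by (auto simp: bij_betw_def k_def)
    then have "inv_into R e i \<in> R" by (rule inv_into_into)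
    then show "t' i a < k" by (simp add: t'_def ek tR)
  qed
  ultimately show ?thesis unfolding rational_map_def by blast
qed

lemma computes_continuous:
  assumes c: "computes t out s f"
  shows "continuous_on UNIV f"
proof (rule continuous_on_locally_constant_coords)
  fix x i
  obtain n where n: "Suc i \<le> length (out_word t out s (take_seq x n))" using c unfolding computes_def by blast
  have "f y i = f x i" if "agree n x y" for y
  proof -
    have p: "take_seq x n = take_seq y n" using that by (simp add: agree_iff_take_seq)
    have il: "i < length (out_word t out s (take_seq x n))" using n by simp
    then have "out_word t out s (take_seq x n) ! i = f x i" using c unfolding computes_def prefix_of_def by blast
    moreover have "out_word t out s (take_seq y n) ! i = f y i" using il p c unfolding computes_def prefix_of_def by auto
    ultimately show ?thesis using p by simp
  qed
  then show "\<exists>n. \<forall>y. agree n x y \<longrightarrow> f y i = f x i" by blast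
qed

lemma rational_continuous: assumes "rational_map f" shows "continuous_on UNIV f"
proof -
  obtain t :: "nat \<Rightarrow> bool \<Rightarrow> nat" and out s where "computes t out s f"
    using rational_map_computes[OF assms] by blast
  then show ?thesis by (rule computes_continuous)
qed

lemma out_word_copy: "out_word (\<lambda>s a. s) (\<lambda>s a. [a]) s v = v"
  by (induction v) auto

lemma out_word_copy_unit: "out_word (\<lambda>s a. ()) (\<lambda>s a. [a]) () v = v"
  by (induction v) auto

lemma rational_id: "rational_map id"
proof (rule computes_rational_map)
  show "computes (\<lambda>s a. s) (\<lambda>s a. [a]) () id"
    by (auto simp: computes_def prefix_of_def out_word_copy_unit intro: exI[of _ m for m])
qed simp

section \<open>Constructions of rational maps\<close>

definition comp_trans ::
  "('p \<Rightarrow> bool \<Rightarrow> 'p) \<Rightarrow> ('p \<Rightarrow> bool \<Rightarrow> bool list) \<Rightarrow> ('q \<Rightarrow> bool \<Rightarrow> 'q) \<Rightarrow> ('p \<times> 'q) \<Rightarrow> bool \<Rightarrow> ('p \<times> 'q)"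
  where "comp_trans t1 o1 t2 = (\<lambda>(p,q) a. (t1 p a, foldl t2 q (o1 p a)))"

definition comp_out ::
  "('p \<Rightarrow> bool \<Rightarrow> bool list) \<Rightarrow> ('q \<Rightarrow> bool \<Rightarrow> 'q) \<Rightarrow> ('q \<Rightarrow> bool \<Rightarrow> bool list) \<Rightarrow> ('p \<times> 'q) \<Rightarrow> bool \<Rightarrow> bool list"
  where "comp_out o1 t2 o2 = (\<lambda>(p,q) a. out_word t2 o2 q (o1 p a))"

lemma foldl_comp: "foldl (comp_trans t1 o1 t2) (p,q) v = (foldl t1 p v, foldl t2 q (out_word t1 o1 p v))"
  by (induction v arbitrary: p q) (auto simp: comp_trans_def)

lemma out_word_comp: "out_word (comp_trans t1 o1 t2) (comp_out o1 t2 o2) (p,q) v = out_word t2 o2 q (out_word t1 o1 p v)"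
  by (induction v arbitrary: p q) (auto simp: comp_trans_def comp_out_def out_word_append)

lemma finite_reach_comp:
  assumes "finite (range (foldl t1 s1))" "finite (range (foldl t2 s2))"
  shows "finite (range (foldl (comp_trans t1 o1 t2) (s1,s2)))"
proof -
  have "foldl (comp_trans t1 o1 t2) (s1,s2) v \<in> range (foldl t1 s1) \<times> range (foldl t2 s2)" for v
    using foldl_comp[of t1 o1 t2 s1 s2 v] by (simp add: mem_Times_iff)
  then have "range (foldl (comp_trans t1 o1 t2) (s1,s2)) \<subseteq> range (foldl t1 s1) \<times> range (foldl t2 s2)"
    by blast
  then show ?thesis using assms by (meson finite_SigmaI finite_subset)
qed

lemma computes_comp:
  assumes c1: "computes t1 o1 s1 f1" and c2: "computes t2 o2 s2 f2"
  shows "computes (comp_trans t1 o1 t2) (comp_out o1 t2 o2) (s1,s2) (f2 \<circ> f1)"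
  unfolding computes_def
proof (intro allI conjI)
  fix x n
  obtain L where pf: "out_word t1 o1 s1 (take_seq x n) = take_seq (f1 x) L"
    using c1 prefix_of_take_seq unfolding computes_def by blast
  have "prefix_of (out_word t2 o2 s2 (take_seq (f1 x) L)) (f2 (f1 x))"
    using c2 by (simp add: computes_def)
  then show "prefix_of (out_word (comp_trans t1 o1 t2) (comp_out o1 t2 o2) (s1, s2) (take_seq x n)) ((f2 \<circ> f1) x)"
    by (simp add: out_word_comp pf)
next
  fix x m
  obtain m1 where m1: "m \<le> length (out_word t2 o2 s2 (take_seq (f1 x) m1))" using c2 unfolding computes_def by blast
  obtain n where n: "m1 \<le> length (out_word t1 o1 s1 (take_seq x n))" using c1 unfolding computes_def by blast
  obtain L where pf: "out_word t1 o1 s1 (take_seq x n) = take_seq (f1 x) L"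
    using c1 prefix_of_take_seq unfolding computes_def by blast
  have "m1 \<le> L" using n pf by simp
  then have "m \<le> length (out_word t2 o2 s2 (take_seq (f1 x) L))"
    using m1 out_word_take_seq_mono[OF \<open>m1 \<le> L\<close>, of t2 o2 s2 "f1 x"] by linarith
  moreover have "out_word (comp_trans t1 o1 t2) (comp_out o1 t2 o2) (s1, s2) (take_seq x n) = out_word t2 o2 s2 (take_seq (f1 x) L)"
    by (simp add: out_word_comp pf)
  ultimately show "\<exists>n. m \<le> length (out_word (comp_trans t1 o1 t2) (comp_out o1 t2 o2) (s1, s2) (take_seq x n))"
    by metis
qed

lemma rational_comp: "rational_map f1 \<Longrightarrow> rational_map f2 \<Longrightarrow> rational_map (f2 \<circ> f1)"
  by (meson computes_comp computes_rational_map finite_reach_comp rational_map_computes)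

(* Buffers the first L letters, then emits E of them and runs t from state st of them. *)
definition buffer_trans :: "nat \<Rightarrow> ('s \<Rightarrow> bool \<Rightarrow> 's) \<Rightarrow> (bool list \<Rightarrow> 's) \<Rightarrow> (bool list + 's) \<Rightarrow> bool \<Rightarrow> (bool list + 's)" where
  "buffer_trans L t st s a = (case s of Inl w \<Rightarrow> (if Suc (length w) < L then Inl (w @ [a]) else Inr (st (w @ [a])))
                              | Inr p \<Rightarrow> Inr (t p a))"

definition buffer_out :: "nat \<Rightarrow> ('s \<Rightarrow> bool \<Rightarrow> bool list) \<Rightarrow> (bool list \<Rightarrow> bool list) \<Rightarrow> (bool list + 's) \<Rightarrow> bool \<Rightarrow> bool list" where
  "buffer_out L out E s a = (case s of Inl w \<Rightarrow> (if Suc (length w) < L then [] else E (w @ [a]))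
                              | Inr p \<Rightarrow> out p a)"

lemma buffer_trans_Inl: "buffer_trans L t st (Inl w) a = (if Suc (length w) < L then Inl (w @ [a]) else Inr (st (w @ [a])))"
  and buffer_trans_Inr: "buffer_trans L t st (Inr p) a = Inr (t p a)"
  and buffer_out_Inl: "buffer_out L out E (Inl w) a = (if Suc (length w) < L then [] else E (w @ [a]))"
  and buffer_out_Inr: "buffer_out L out E (Inr p) a = out p a"
  by (simp_all add: buffer_trans_def buffer_out_def)

lemma buffer_trans_run:
  assumes L: "1 \<le> L"
  shows "foldl (buffer_trans L t st) (Inl []) (take_seq x n) = (if n < L then Inl (take_seq x n) else Inr (foldl t (st (take_seq x L)) (take_seq (shift L x) (n - L))))
    \<and> out_word (buffer_trans L t st) (buffer_out L out E) (Inl []) (take_seq x n) = (if n < L then [] else E (take_seq x L) @ out_word t out (st (take_seq x L)) (take_seq (shift L x) (n - L)))"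
proof (induction n)
  case 0 then show ?case using L by simp
next
  case (Suc n)
  show ?case
  proof (cases "Suc n < L")
    case True
    then have "n < L" by simp
    then show ?thesis using Suc True by (simp add: take_seq_Suc out_word_snoc buffer_trans_Inl buffer_trans_Inr buffer_out_Inl buffer_out_Inr)
  next
    case False
    show ?thesis
    proof (cases "n < L")
      case True
      then have nL: "L = Suc n" using False by simp
      have IH: "foldl (buffer_trans L t st) (Inl []) (take_seq x n) = Inl (take_seq x n)" "out_word (buffer_trans L t st) (buffer_out L out E) (Inl []) (take_seq x n) = []"
        using Suc True by simp_all
      show ?thesis unfolding nL using IH[unfolded nL] by (simp add: take_seq_Suc out_word_snoc buffer_trans_Inl buffer_trans_Inr buffer_out_Inl buffer_out_Inr)
    next
      case False
      then have "Suc n - L = Suc (n - L)" by simp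
      moreover have "shift L x (n - L) = x n" using False by (simp add: shift_def)
      ultimately show ?thesis using Suc False \<open>\<not> Suc n < L\<close>
        by (simp add: take_seq_Suc out_word_snoc buffer_trans_Inl buffer_trans_Inr buffer_out_Inl buffer_out_Inr)
    qed
  qed
qed

lemma computes_buffer_trans:
  assumes L: "1 \<le> L"
    and ok1: "\<And>x k. prefix_of (E (take_seq x L) @ out_word t out (st (take_seq x L)) (take_seq (shift L x) k)) (m x)"
    and ok2: "\<And>x M. \<exists>k. M \<le> length (out_word t out (st (take_seq x L)) (take_seq (shift L x) k))"
  shows "computes (buffer_trans L t st) (buffer_out L out E) (Inl []) m"
  unfolding computes_def
proof (intro allI conjI)
  fix x n
  show "prefix_of (out_word (buffer_trans L t st) (buffer_out L out E) (Inl []) (take_seq x n)) (m x)"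
    using buffer_trans_run[OF L, of t st x n out E] ok1[of x "n - L"] by (simp add: prefix_of_def)
next
  fix x M
  obtain k where k: "M \<le> length (out_word t out (st (take_seq x L)) (take_seq (shift L x) k))" using ok2 by blast
  have "out_word (buffer_trans L t st) (buffer_out L out E) (Inl []) (take_seq x (L + k)) = E (take_seq x L) @ out_word t out (st (take_seq x L)) (take_seq (shift L x) k)"
    using buffer_trans_run[OF L, of t st x "L + k" out E] by simp
  then show "\<exists>n. M \<le> length (out_word (buffer_trans L t st) (buffer_out L out E) (Inl []) (take_seq x n))"
    using k by (intro exI[of _ "L + k"]) simp
qed

lemma finite_reach_buffer:
  assumes L: "1 \<le> L" and fin: "finite (range (\<lambda>(w, v). foldl t (st w) v))"
  shows "finite (range (foldl (buffer_trans L t st) (Inl [])))"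
proof -
  define Q where "Q = range (\<lambda>(w, v). foldl t (st w) v)"
  define I where "I = Inl ` {w :: bool list. length w < L} \<union> Inr ` Q"
  have st: "st w \<in> Q" for w
    unfolding Q_def by (rule range_eqI[of _ _ "(w, [])"]) simp
  have step: "t p a \<in> Q" if p: "p \<in> Q" for p a
  proof -
    obtain w v where "p = foldl t (st w) v" using p unfolding Q_def by auto
    then show ?thesis unfolding Q_def by (intro range_eqI[of _ _ "(w, v @ [a])"]) simp
  qed
  have "finite {w. set w \<subseteq> (UNIV :: bool set) \<and> length w \<le> L}"
    by (rule finite_lists_length_le) simp
  then have "finite {w :: bool list. length w < L}" by (rule finite_subset[rotated]) auto
  then have "finite I" using fin by (simp add: I_def Q_def)
  moreover have "Inl [] \<in> I" using L by (simp add: I_def)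
  moreover have "buffer_trans L t st q a \<in> I" if "q \<in> I" for q a
    using that st step by (auto simp: I_def buffer_trans_def)
  ultimately show ?thesis by (rule finite_reach_invariant)
qed

lemma rational_block_form:
  fixes F :: "bool list \<Rightarrow> bool list"
  assumes L: "1 \<le> L"
  shows "rational_map (\<lambda>x. prepend (F (take_seq x L)) (shift L x))"
proof -
  let ?t = "\<lambda>(s::unit) a. s" and ?o = "\<lambda>(s::unit) a. [a]" and ?st = "\<lambda>w::bool list. ()"
  have c: "computes (buffer_trans L ?t ?st) (buffer_out L ?o F) (Inl []) (\<lambda>x. prepend (F (take_seq x L)) (shift L x))"
  proof (rule computes_buffer_trans[OF L])
    fix x k
    have "prefix_of (take_seq (prepend (F (take_seq x L)) (shift L x)) (length (F (take_seq x L)) + k)) (prepend (F (take_seq x L)) (shift L x))"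
      by (rule prefix_of_take_seq_self)
    then show "prefix_of (F (take_seq x L) @ out_word ?t ?o (?st (take_seq x L)) (take_seq (shift L x) k)) (prepend (F (take_seq x L)) (shift L x))"
      by (simp add: out_word_copy out_word_copy_unit take_seq_prepend)
  next
    fix x M
    show "\<exists>k. M \<le> length (out_word ?t ?o (?st (take_seq x L)) (take_seq (shift L x) k))"
      by (intro exI[of _ M]) (simp add: out_word_copy out_word_copy_unit)
  qed
  have "finite (range (\<lambda>(w, v). foldl ?t (?st w) v))" by (rule finite_subset[of _ UNIV]) auto
  then have "finite (range (foldl (buffer_trans L ?t ?st) (Inl [])))" by (rule finite_reach_buffer[OF L])
  then show ?thesis using c by (rule computes_rational_map)
qed

lemma computes_tail_unbounded:
  assumes c: "computes t out s f"
  shows "\<exists>k. M \<le> length (out_word t out (foldl t s (take_seq x L)) (take_seq (shift L x) k))"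
proof -
  obtain N where N: "M + length (out_word t out s (take_seq x L)) \<le> length (out_word t out s (take_seq x N))"
    using c unfolding computes_def by blast
  define N' where "N' = max N L"
  have "length (out_word t out s (take_seq x N)) \<le> length (out_word t out s (take_seq x N'))"
    by (rule out_word_take_seq_mono) (simp add: N'_def)
  moreover have "N' = L + (N' - L)" by (simp add: N'_def)
  then have "out_word t out s (take_seq x N') = out_word t out s (take_seq x L) @ out_word t out (foldl t s (take_seq x L)) (take_seq (shift L x) (N' - L))"
    by (metis take_seq_add out_word_append)
  ultimately show ?thesis using N by (intro exI[of _ "N' - L"]) simp
qed

definition sum_trans :: "('p \<Rightarrow> bool \<Rightarrow> 'p) \<Rightarrow> ('q \<Rightarrow> bool \<Rightarrow> 'q) \<Rightarrow> ('p + 'q) \<Rightarrow> bool \<Rightarrow> ('p + 'q)" where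
  "sum_trans t1 t2 s a = (case s of Inl p \<Rightarrow> Inl (t1 p a) | Inr q \<Rightarrow> Inr (t2 q a))"

definition sum_out :: "('p \<Rightarrow> bool \<Rightarrow> bool list) \<Rightarrow> ('q \<Rightarrow> bool \<Rightarrow> bool list) \<Rightarrow> ('p + 'q) \<Rightarrow> bool \<Rightarrow> bool list" where
  "sum_out o1 o2 s a = (case s of Inl p \<Rightarrow> o1 p a | Inr q \<Rightarrow> o2 q a)"

lemma foldl_sum_trans: "foldl (sum_trans t1 t2) (Inl p) v = Inl (foldl t1 p v)" "foldl (sum_trans t1 t2) (Inr q) v = Inr (foldl t2 q v)"
  by (induction v arbitrary: p q) (simp_all add: sum_trans_def)

lemma out_word_sum_trans: "out_word (sum_trans t1 t2) (sum_out o1 o2) (Inl p) v = out_word t1 o1 p v"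
  "out_word (sum_trans t1 t2) (sum_out o1 o2) (Inr q) v = out_word t2 o2 q v"
  by (induction v arbitrary: p q) (simp_all add: sum_trans_def sum_out_def)

lemma computes_piecewise:
  fixes P :: "bool list \<Rightarrow> bool"
  assumes L: "1 \<le> L" and c1: "computes t1 o1 s1 f1" and c2: "computes t2 o2 s2 f2"
  defines "st \<equiv> \<lambda>w. if P w then Inl (foldl t1 s1 w) else Inr (foldl t2 s2 w)"
    and "E \<equiv> \<lambda>w. if P w then out_word t1 o1 s1 w else out_word t2 o2 s2 w"
  shows "computes (buffer_trans L (sum_trans t1 t2) st) (buffer_out L (sum_out o1 o2) E) (Inl [])
    (\<lambda>x. if P (take_seq x L) then f1 x else f2 x)"
proof (rule computes_buffer_trans[OF L])
  fix x k
  let ?tail = "out_word (sum_trans t1 t2) (sum_out o1 o2) (st (take_seq x L)) (take_seq (shift L x) k)"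
  show "prefix_of (E (take_seq x L) @ ?tail) (if P (take_seq x L) then f1 x else f2 x)"
  proof (cases "P (take_seq x L)")
    case True
    then have "E (take_seq x L) @ ?tail = out_word t1 o1 s1 (take_seq x (L + k))"
      by (simp add: E_def st_def out_word_sum_trans take_seq_add out_word_append)
    then show ?thesis using True c1 by (simp add: computes_def)
  next
    case False
    then have "E (take_seq x L) @ ?tail = out_word t2 o2 s2 (take_seq x (L + k))"
      by (simp add: E_def st_def out_word_sum_trans take_seq_add out_word_append)
    then show ?thesis using False c2 by (simp add: computes_def)
  qed
next
  fix x M
  show "\<exists>k. M \<le> length (out_word (sum_trans t1 t2) (sum_out o1 o2) (st (take_seq x L)) (take_seq (shift L x) k))"
    using computes_tail_unbounded[OF c1, of M x L] computes_tail_unbounded[OF c2, of M x L]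
    by (simp add: st_def out_word_sum_trans)
qed

lemma finite_range_piecewise_state:
  assumes "finite (range (foldl t1 s1))" "finite (range (foldl t2 s2))"
  shows "finite (range (\<lambda>(w, v). foldl (sum_trans t1 t2)
    (if P w then Inl (foldl t1 s1 w) else Inr (foldl t2 s2 w)) v))"
proof (rule finite_subset)
  show "range (\<lambda>(w, v). foldl (sum_trans t1 t2) (if P w then Inl (foldl t1 s1 w) else Inr (foldl t2 s2 w)) v)
      \<subseteq> Inl ` range (foldl t1 s1) \<union> Inr ` range (foldl t2 s2)"
    by (auto simp: foldl_sum_trans simp flip: foldl_append)
qed (use assms in auto)

lemma rational_piecewise:
  assumes r1: "rational_map f1" and r2: "rational_map f2" and L: "1 \<le> L"
  shows "rational_map (\<lambda>x. if P (take_seq x L) then f1 x else f2 x)"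
proof -
  obtain t1 :: "nat \<Rightarrow> bool \<Rightarrow> nat" and o1 s1
    where T1: "finite (range (foldl t1 s1))" "computes t1 o1 s1 f1"
    using rational_map_computes[OF r1] by blast
  obtain t2 :: "nat \<Rightarrow> bool \<Rightarrow> nat" and o2 s2
    where T2: "finite (range (foldl t2 s2))" "computes t2 o2 s2 f2"
    using rational_map_computes[OF r2] by blast
  show ?thesis
    by (rule computes_rational_map[OF finite_reach_buffer[OF L finite_range_piecewise_state[OF T1(1) T2(1)]]
          computes_piecewise[OF L T1(2) T2(2)]])
qed

section \<open>Inverses of rational homeomorphisms\<close>

definition images_agree :: "(cantor \<Rightarrow> cantor) \<Rightarrow> bool list \<Rightarrow> nat \<Rightarrow> bool" where
  "images_agree h v n \<longleftrightarrow> (\<forall>\<eta> \<eta>'. agree n (h (prepend v \<eta>)) (h (prepend v \<eta>')))"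

definition common_len :: "(cantor \<Rightarrow> cantor) \<Rightarrow> bool list \<Rightarrow> nat" where
  "common_len h v = (GREATEST n. images_agree h v n)"

lemma images_agree_0[simp]: "images_agree h v 0"
  by (simp add: images_agree_def agree_def)

lemma images_agree_mono: "images_agree h v n \<Longrightarrow> m \<le> n \<Longrightarrow> images_agree h v m"
  by (auto simp: images_agree_def agree_def)

lemma common_len_props:
  assumes "\<And>n. images_agree h v n \<Longrightarrow> n \<le> B"
  shows "images_agree h v (common_len h v)" "\<And>n. images_agree h v n \<Longrightarrow> n \<le> common_len h v"
proof -
  show "images_agree h v (common_len h v)" unfolding common_len_def
    by (rule GreatestI_nat[of _ 0]) (use assms in auto)
  show "\<And>n. images_agree h v n \<Longrightarrow> n \<le> common_len h v" unfolding common_len_def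
    by (rule Greatest_le_nat[of _ _ B]) (use assms in auto)
qed

lemma images_agree_bound:
  assumes "inj h"
  shows "\<exists>B. \<forall>n. images_agree h v n \<longrightarrow> n \<le> B"
proof -
  define ones :: cantor where "ones = (\<lambda>_. True)"
  have "prepend v zeros \<noteq> prepend v ones"
  proof
    assume "prepend v zeros = prepend v ones"
    then have "prepend v zeros (length v + 0) = prepend v ones (length v + 0)" by simp
    then show False using prepend_ge[of v zeros 0] prepend_ge[of v ones 0] by (simp add: zeros_def ones_def)
  qed
  then have "h (prepend v zeros) \<noteq> h (prepend v ones)" using assms by (meson injD)
  then obtain d where d: "h (prepend v zeros) d \<noteq> h (prepend v ones) d" by blast
  have "n \<le> d" if "images_agree h v n" for n
  proof (rule ccontr)
    assume "\<not> n \<le> d"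
    then have "d < n" by simp
    then show False using that d by (auto simp: images_agree_def agree_def)
  qed
  then show ?thesis by blast
qed

definition residual_step :: "(cantor \<Rightarrow> cantor) \<Rightarrow> bool \<Rightarrow> (cantor \<Rightarrow> cantor)" where
  "residual_step h a = (\<lambda>\<eta>. shift (common_len h [a]) (h (prepend [a] \<eta>)))"

definition residual_out :: "(cantor \<Rightarrow> cantor) \<Rightarrow> bool \<Rightarrow> bool list" where
  "residual_out h a = map (\<lambda>i. h (prepend [a] zeros) i) [0..<common_len h [a]]"

locale cantor_homeo =
  fixes g :: "cantor \<Rightarrow> cantor"
  assumes inj: "inj g" and surj: "surj g" and cont: "continuous_on UNIV g"
begin

definition residual :: "bool list \<Rightarrow> cantor \<Rightarrow> cantor" where
  "residual u = (\<lambda>\<eta>. shift (common_len g u) (g (prepend u \<eta>)))"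

lemma common_len_greatest: "images_agree g v (common_len g v)" "images_agree g v n \<Longrightarrow> n \<le> common_len g v"
proof -
  obtain B where "\<forall>n. images_agree g v n \<longrightarrow> n \<le> B" using images_agree_bound[OF inj] by blast
  then show "images_agree g v (common_len g v)" "images_agree g v n \<Longrightarrow> n \<le> common_len g v"
    using common_len_props[of g v B] by auto
qed

lemma common_len_Nil: "common_len g [] = 0"
proof (rule ccontr)
  assume "common_len g [] \<noteq> 0"
  then have "images_agree g [] 1" using common_len_greatest(1)[of "[]"] images_agree_mono by fastforce
  obtain \<eta> where e: "g \<eta> = zeros" using surj by (metis surjD)
  obtain \<eta>' where e': "g \<eta>' = (\<lambda>_. True)" using surj by (metis surjD)
  have "agree 1 (g \<eta>) (g \<eta>')" using \<open>images_agree g [] 1\<close> by (simp add: images_agree_def)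
  then have "g \<eta> 0 = g \<eta>' 0" by (simp add: agree_def)
  then show False using e e' by (simp add: zeros_def)
qed

lemma residual_Nil: "residual [] = g"
  by (simp add: residual_def common_len_Nil fun_eq_iff)

lemma images_agree_snoc: "images_agree g u n \<Longrightarrow> images_agree g (u @ [a]) n"
  by (simp add: images_agree_def prepend_append)

lemma common_len_snoc_equiv:
  "images_agree (residual u) [a] m \<longleftrightarrow> images_agree g (u @ [a]) (common_len g u + m)"
proof -
  have ag: "agree (common_len g u) (g (prepend (u @ [a]) \<eta>)) (g (prepend (u @ [a]) \<eta>'))" for \<eta> \<eta>'
    using images_agree_snoc[OF common_len_greatest(1)[of u], of a] by (simp add: images_agree_def)
  have "residual u (prepend [a] \<eta>) = shift (common_len g u) (g (prepend (u @ [a]) \<eta>))" for \<eta>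
    by (simp add: residual_def prepend_append)
  then show ?thesis using ag by (simp add: images_agree_def agree_shift)
qed

lemma common_len_snoc:
  shows "common_len g u \<le> common_len g (u @ [a])" "common_len (residual u) [a] = common_len g (u @ [a]) - common_len g u"
proof -
  define L where "L = common_len g u"
  define G where "G = common_len g (u @ [a])"
  show "common_len g u \<le> common_len g (u @ [a])"
    using common_len_greatest(2)[OF images_agree_snoc[OF common_len_greatest(1)[of u]]] .
  then have LG: "L \<le> G" by (simp add: L_def G_def)
  have P: "images_agree (residual u) [a] m \<Longrightarrow> m \<le> G - L" for m
    using common_len_snoc_equiv[of u a m] common_len_greatest(2)[of "u @ [a]" "L + m"] by (simp add: L_def G_def)
  have "images_agree (residual u) [a] (G - L)"
    using common_len_snoc_equiv[of u a "G - L"] common_len_greatest(1)[of "u @ [a]"] LG by (simp add: L_def G_def)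
  then show "common_len (residual u) [a] = common_len g (u @ [a]) - common_len g u"
    using common_len_props[of "residual u" "[a]" "G - L", OF P] P by (simp add: L_def G_def le_antisym)
qed

lemma residual_step_residual: "residual_step (residual u) a = residual (u @ [a])"
proof -
  have "residual_step (residual u) a = (\<lambda>\<eta>. shift (common_len g (u @ [a]) - common_len g u) (shift (common_len g u) (g (prepend (u @ [a]) \<eta>))))"
    unfolding residual_step_def common_len_snoc(2) by (simp add: residual_def prepend_append)
  also have "\<dots> = residual (u @ [a])"
    using common_len_snoc(1)[of u a] by (simp add: shift_shift residual_def)
  finally show ?thesis .
qed

lemma foldl_residual_step: "foldl residual_step g u = residual u"
  by (induction u rule: rev_induct) (simp_all add: residual_Nil residual_step_residual)

lemma out_word_residual_step: "out_word residual_step residual_out g u = map (\<lambda>i. g (prepend u zeros) i) [0..<common_len g u]"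
proof (induction u rule: rev_induct)
  case Nil then show ?case by (simp add: common_len_Nil)
next
  case (snoc a u)
  define L where "L = common_len g u"
  define G where "G = common_len g (u @ [a])"
  have LG: "L \<le> G" using common_len_snoc(1) by (simp add: L_def G_def)
  have ag: "g (prepend u zeros) i = g (prepend (u @ [a]) zeros) i" if "i < L" for i
    using common_len_greatest(1)[of u] that unfolding images_agree_def agree_def L_def
    by (metis prepend_append)
  have o: "residual_out (residual u) a = map (\<lambda>i. g (prepend (u @ [a]) zeros) (i + L)) [0..<G - L]"
    unfolding residual_out_def common_len_snoc(2) by (simp add: residual_def prepend_append shift_def L_def G_def)
  have "out_word residual_step residual_out g (u @ [a]) = map (\<lambda>i. g (prepend u zeros) i) [0..<L] @ residual_out (residual u) a"
    by (simp add: out_word_snoc snoc foldl_residual_step L_def)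
  also have "\<dots> = map (\<lambda>i. g (prepend (u @ [a]) zeros) i) [0..<G]"
    unfolding o using LG ag by (auto simp: list_eq_iff_nth_eq nth_append)
  finally show ?case by (simp add: G_def)
qed

lemma computes_residual: "computes residual_step residual_out g g"
  unfolding computes_def
proof (intro allI conjI)
  fix y n
  define u where "u = take_seq y n"
  have "g (prepend u zeros) i = g y i" if "i < common_len g u" for i
  proof -
    have "agree (common_len g u) (g (prepend u zeros)) (g (prepend u (shift n y)))"
      using common_len_greatest(1)[of u] by (simp add: images_agree_def)
    then show ?thesis using that prepend_take_seq_shift[of y n] by (simp add: agree_def u_def)
  qed
  then show "prefix_of (out_word residual_step residual_out g (take_seq y n)) (g y)"
    by (simp add: prefix_of_def out_word_residual_step u_def)
next
  fix y m
  obtain M where M: "\<forall>x z. agree M x z \<longrightarrow> agree m (g x) (g z)" using uniformly_continuous_agree[OF cont] by blast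
  have "agree M (prepend (take_seq y M) \<eta>) (prepend (take_seq y M) \<eta>')" for \<eta> \<eta>'
    by (simp add: agree_def)
  then have "images_agree g (take_seq y M) m" using M by (simp add: images_agree_def)
  then have "m \<le> common_len g (take_seq y M)" by (rule common_len_greatest(2))
  then show "\<exists>n. m \<le> length (out_word residual_step residual_out g (take_seq y n))"
    by (auto simp: out_word_residual_step)
qed

end

locale rational_homeo_inverse = cantor_homeo g for g +
  fixes f :: "cantor \<Rightarrow> cantor" and t :: "'s \<Rightarrow> bool \<Rightarrow> 's" and out s0
  assumes fg: "\<And>y. f (g y) = y" and gf: "\<And>x. g (f x) = x"
    and comp: "computes t out s0 f" and finR: "finite (range (foldl t s0))"
begin

definition tail_map :: "bool list \<Rightarrow> cantor \<Rightarrow> cantor" where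
  "tail_map w \<xi> = shift (length (out_word t out s0 w)) (f (prepend w \<xi>))"

lemma f_prepend: "f (prepend w \<xi>) = prepend (out_word t out s0 w) (tail_map w \<xi>)"
proof -
  have "prefix_of (out_word t out s0 (take_seq (prepend w \<xi>) (length w))) (f (prepend w \<xi>))"
    using comp by (simp add: computes_def)
  then have "prefix_of (out_word t out s0 w) (f (prepend w \<xi>))" by (simp add: take_seq_prepend_len)
  then show ?thesis unfolding tail_map_def by (rule prefix_of_prepend_shift[symmetric])
qed

lemma tail_map_prefix: "prefix_of (out_word t out (foldl t s0 w) (take_seq \<xi> n)) (tail_map w \<xi>)"
proof -
  have "prefix_of (out_word t out s0 (take_seq (prepend w \<xi>) (length w + n))) (f (prepend w \<xi>))"
    using comp by (simp add: computes_def)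
  then have "prefix_of (out_word t out s0 w @ out_word t out (foldl t s0 w) (take_seq \<xi> n)) (f (prepend w \<xi>))"
    by (simp add: take_seq_prepend out_word_append)
  then show ?thesis unfolding tail_map_def by (rule prefix_of_append)
qed

lemma tail_map_unbounded: "\<exists>n. m \<le> length (out_word t out (foldl t s0 w) (take_seq \<xi> n))"
  using computes_tail_unbounded[OF comp, of m "prepend w \<xi>" "length w"]
  by (simp add: take_seq_prepend_len)

lemma tail_map_state_determined: assumes "foldl t s0 w = foldl t s0 w'" shows "tail_map w = tail_map w'"
proof (intro ext)
  fix \<xi> i
  obtain n where n: "Suc i \<le> length (out_word t out (foldl t s0 w) (take_seq \<xi> n))" using tail_map_unbounded by blast
  have "tail_map w \<xi> i = out_word t out (foldl t s0 w) (take_seq \<xi> n) ! i"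
    using tail_map_prefix[of w \<xi> n] n by (simp add: prefix_of_def)
  moreover have "tail_map w' \<xi> i = out_word t out (foldl t s0 w) (take_seq \<xi> n) ! i"
    using tail_map_prefix[of w' \<xi> n] n assms by (simp add: prefix_of_def)
  ultimately show "tail_map w \<xi> i = tail_map w' \<xi> i" by simp
qed

lemma tail_map_inj: "tail_map w \<xi> = tail_map w \<xi>' \<Longrightarrow> \<xi> = \<xi>'"
proof -
  assume "tail_map w \<xi> = tail_map w \<xi>'"
  then have "f (prepend w \<xi>) = f (prepend w \<xi>')" by (simp add: f_prepend)
  then have "g (f (prepend w \<xi>)) = g (f (prepend w \<xi>'))" by simp
  then have "prepend w \<xi> = prepend w \<xi>'" by (simp add: gf)
  then show "\<xi> = \<xi>'" by (rule prepend_inj)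
qed

lemma tail_map_head_separated: "\<exists>N. \<forall>\<xi> \<xi>'. agree N (tail_map w \<xi>) (tail_map w \<xi>') \<longrightarrow> \<xi> 0 = \<xi>' 0"
proof -
  obtain M where M: "\<forall>x z. agree M x z \<longrightarrow> agree (Suc (length w)) (g x) (g z)"
    using uniformly_continuous_agree[OF cont] by blast
  have "\<xi> 0 = \<xi>' 0" if a: "agree M (tail_map w \<xi>) (tail_map w \<xi>')" for \<xi> \<xi>'
  proof -
    have "agree (length (out_word t out s0 w) + M) (prepend (out_word t out s0 w) (tail_map w \<xi>)) (prepend (out_word t out s0 w) (tail_map w \<xi>'))"
      by (rule agree_prepend[OF a])
    then have "agree (length (out_word t out s0 w) + M) (f (prepend w \<xi>)) (f (prepend w \<xi>'))"
      by (simp only: f_prepend)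
    then have "agree M (f (prepend w \<xi>)) (f (prepend w \<xi>'))" by (rule agree_mono) simp
    then have "agree (Suc (length w)) (g (f (prepend w \<xi>))) (g (f (prepend w \<xi>')))" using M by blast
    then have "agree (Suc (length w)) (prepend w \<xi>) (prepend w \<xi>')" by (simp only: gf)
    then have "prepend w \<xi> (length w + 0) = prepend w \<xi>' (length w + 0)" unfolding agree_def by simp
    then show ?thesis by (simp only: prepend_ge)
  qed
  then show ?thesis by blast
qed

definition state_word :: "'s \<Rightarrow> bool list" where "state_word s = (SOME w. foldl t s0 w = s)"

definition state_tail_map :: "'s \<Rightarrow> cantor \<Rightarrow> cantor" where "state_tail_map s = tail_map (state_word s)"

(* By continuity of f\<^sup>-\<^sup>1, a bounded prefix of the tail map output determines the first letter. *)
definition sep_len :: "'s \<Rightarrow> nat" where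
  "sep_len s = (SOME N. \<forall>\<xi> \<xi>'. agree N (state_tail_map s \<xi>) (state_tail_map s \<xi>') \<longrightarrow> \<xi> 0 = \<xi>' 0)"

definition max_sep_len :: nat where "max_sep_len = Max (sep_len ` range (foldl t s0))"

definition tail_inverse :: "'s \<Rightarrow> bool list \<Rightarrow> cantor \<Rightarrow> cantor" where
  "tail_inverse s r = (\<lambda>\<eta>. THE \<xi>. state_tail_map s \<xi> = prepend r \<eta>)"

lemma state_tail_map_eq: "state_tail_map (foldl t s0 w) = tail_map w"
proof -
  have "\<exists>w'. foldl t s0 w' = foldl t s0 w" by blast
  then have "foldl t s0 (state_word (foldl t s0 w)) = foldl t s0 w"
    unfolding state_word_def by (rule someI_ex)
  then show ?thesis unfolding state_tail_map_def by (rule tail_map_state_determined)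
qed

lemma sep_len_separates: "agree (sep_len s) (state_tail_map s \<xi>) (state_tail_map s \<xi>') \<Longrightarrow> \<xi> 0 = \<xi>' 0"
proof -
  have "\<exists>N. \<forall>\<xi> \<xi>'. agree N (state_tail_map s \<xi>) (state_tail_map s \<xi>') \<longrightarrow> \<xi> 0 = \<xi>' 0"
    unfolding state_tail_map_def by (rule tail_map_head_separated)
  then have "\<forall>\<xi> \<xi>'. agree (sep_len s) (state_tail_map s \<xi>) (state_tail_map s \<xi>') \<longrightarrow> \<xi> 0 = \<xi>' 0"
    unfolding sep_len_def by (rule someI_ex)
  then show "agree (sep_len s) (state_tail_map s \<xi>) (state_tail_map s \<xi>') \<Longrightarrow> \<xi> 0 = \<xi>' 0" by blast
qed

lemma sep_len_le: "sep_len (foldl t s0 w) \<le> max_sep_len"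
  unfolding max_sep_len_def using finR by (intro Max_ge) auto

definition common_word :: "bool list \<Rightarrow> bool list" where
  "common_word u = take_seq (g (prepend u zeros)) (common_len g u)"

lemma g_prepend_residual: "g (prepend u \<eta>) = prepend (common_word u) (residual u \<eta>)"
proof -
  have "agree (common_len g u) (g (prepend u zeros)) (g (prepend u \<eta>))"
    using common_len_greatest(1)[of u] by (simp add: images_agree_def)
  then have "common_word u = take_seq (g (prepend u \<eta>)) (common_len g u)"
    by (simp add: common_word_def agree_iff_take_seq)
  then show ?thesis by (simp add: residual_def prepend_take_seq_shift)
qed

lemma residual_head_varies: "\<exists>\<eta> \<eta>'. residual u \<eta> 0 \<noteq> residual u \<eta>' 0"
proof -
  define L where "L = common_len g u"
  have "\<not> images_agree g u (Suc L)" using common_len_greatest(2)[of u "Suc L"] by (auto simp: L_def)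
  then obtain \<eta> \<eta>' where ne: "\<not> agree (Suc L) (g (prepend u \<eta>)) (g (prepend u \<eta>'))"
    by (auto simp: images_agree_def)
  have "agree L (g (prepend u \<eta>)) (g (prepend u \<eta>'))"
    using common_len_greatest(1)[of u] by (simp add: images_agree_def L_def)
  then have "g (prepend u \<eta>) L \<noteq> g (prepend u \<eta>') L"
    using ne by (auto simp: agree_def less_Suc_eq)
  then show ?thesis by (auto simp: residual_def shift_def L_def)
qed

lemma tail_map_residual:
  obtains r where "\<And>\<eta>. tail_map (common_word u) (residual u \<eta>) = prepend r \<eta>"
proof -
  define w where "w = common_word u"
  define o' where "o' = out_word t out s0 w"
  have u_eq: "prepend u \<eta> = prepend o' (tail_map w (residual u \<eta>))" for \<eta>
  proof -
    have "prepend u \<eta> = f (g (prepend u \<eta>))" by (simp only: fg)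
    also have "\<dots> = f (prepend w (residual u \<eta>))" by (simp only: g_prepend_residual w_def)
    also have "\<dots> = prepend o' (tail_map w (residual u \<eta>))" by (simp only: f_prepend o'_def)
    finally show ?thesis .
  qed
  have short: "length o' \<le> length u"
  proof (rule ccontr)
    assume "\<not> length o' \<le> length u"
    then have lt: "length u < length o'" by simp
    define \<eta> :: cantor where "\<eta> = (\<lambda>_. \<not> o' ! length u)"
    have "prepend u \<eta> (length u + 0) = prepend o' (tail_map w (residual u \<eta>)) (length u)"
      using u_eq[of \<eta>] by simp
    then have "\<eta> 0 = o' ! length u" using lt by (simp only: prepend_ge prepend_lt)
    then show False by (simp add: \<eta>_def)
  qed
  define r where "r = drop (length o') u"
  have "o' ! i = u ! i" if "i < length o'" for i
    using u_eq[of zeros] that short by (metis order_less_le_trans prepend_lt)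
  then have "take (length o') u = o'" using short by (simp add: list_eq_iff_nth_eq)
  then have "u = o' @ r" by (metis append_take_drop_id r_def)
  then have "prepend o' (prepend r \<eta>) = prepend o' (tail_map w (residual u \<eta>))" for \<eta>
    using u_eq[of \<eta>] by (simp add: prepend_append)
  then show ?thesis using that[of r] prepend_inj by (metis w_def)
qed

lemma residual_eq_tail_inverse:
  assumes r: "\<And>\<eta>. tail_map w (residual u \<eta>) = prepend r \<eta>"
  shows "residual u = tail_inverse (foldl t s0 w) r"
proof (rule ext)
  fix \<eta>
  have "(THE \<xi>. tail_map w \<xi> = prepend r \<eta>) = residual u \<eta>"
  proof (rule the_equality)
    fix \<xi> assume "tail_map w \<xi> = prepend r \<eta>"
    then show "\<xi> = residual u \<eta>" using r[of \<eta>] tail_map_inj by metis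
  qed (rule r)
  then show "residual u \<eta> = tail_inverse (foldl t s0 w) r \<eta>"
    by (simp add: tail_inverse_def state_tail_map_eq)
qed

lemma length_residual_suffix:
  assumes r: "\<And>\<eta>. tail_map w (residual u \<eta>) = prepend r \<eta>"
  shows "length r < max_sep_len"
proof (rule ccontr)
  assume "\<not> length r < max_sep_len"
  then have rN: "sep_len (foldl t s0 w) \<le> length r" using sep_len_le[of w] by simp
  obtain \<eta> \<eta>' where ne: "residual u \<eta> 0 \<noteq> residual u \<eta>' 0" using residual_head_varies by blast
  have "agree (length r) (prepend r \<eta>) (prepend r \<eta>')" by (simp add: agree_def)
  then have "agree (sep_len (foldl t s0 w)) (state_tail_map (foldl t s0 w) (residual u \<eta>))
      (state_tail_map (foldl t s0 w) (residual u \<eta>'))"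
    using rN by (simp add: state_tail_map_eq r agree_mono)
  then show False using sep_len_separates ne by blast
qed

lemma residual_repr:
  "\<exists>s r. s \<in> range (foldl t s0) \<and> length r < max_sep_len \<and> residual u = tail_inverse s r"
proof -
  obtain r where "\<And>\<eta>. tail_map (common_word u) (residual u \<eta>) = prepend r \<eta>"
    using tail_map_residual by blast
  then show ?thesis using residual_eq_tail_inverse length_residual_suffix by blast
qed

lemma finite_reach_residual: "finite (range (foldl residual_step g))"
proof -
  have "range (foldl residual_step g) \<subseteq> (\<lambda>(s, r). tail_inverse s r) ` (range (foldl t s0) \<times> {r. set r \<subseteq> UNIV \<and> length r \<le> max_sep_len})"
  proof
    fix h assume "h \<in> range (foldl residual_step g)"
    then obtain u where "h = residual u" by (auto simp: foldl_residual_step)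
    then obtain s r where sr: "s \<in> range (foldl t s0)" "length r < max_sep_len" "h = tail_inverse s r" using residual_repr by blast
    then have "(s, r) \<in> range (foldl t s0) \<times> {r. set r \<subseteq> UNIV \<and> length r \<le> max_sep_len}" by simp
    then show "h \<in> (\<lambda>(s, r). tail_inverse s r) ` (range (foldl t s0) \<times> {r. set r \<subseteq> UNIV \<and> length r \<le> max_sep_len})"
      by (rule rev_image_eqI[of "(s,r)"]) (simp_all add: sr)
  qed
  moreover have "finite (range (foldl t s0) \<times> {r. set r \<subseteq> (UNIV::bool set) \<and> length r \<le> max_sep_len})"
    using finR finite_lists_length_le[of "UNIV::bool set" max_sep_len] by simp
  ultimately show ?thesis by (meson finite_imageI finite_subset)
qed

end

lemma rational_inverse:
  assumes h: "homeomorphism UNIV UNIV f g" and r: "rational_map f"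
  shows "rational_map g"
proof -
  obtain t :: "nat \<Rightarrow> bool \<Rightarrow> nat" and out s0 where ts: "finite (range (foldl t s0))" "computes t out s0 f"
    using rational_map_computes[OF r] by blast
  have fg: "\<And>y. f (g y) = y" and gf: "\<And>x. g (f x) = x" and cg: "continuous_on UNIV g"
    using h by (auto simp: homeomorphism_def)
  have "inj g" by (metis fg injI)
  moreover have "surj g" by (metis gf surjI)
  ultimately interpret rational_homeo_inverse g f t out s0
    using fg gf ts cg by unfold_locales auto
  show ?thesis using computes_rational_map[OF finite_reach_residual computes_residual] .
qed

section \<open>The group of rational homeomorphisms\<close>

lemma (in group) commutator_in_derived:
  "a \<in> carrier G \<Longrightarrow> b \<in> carrier G \<Longrightarrow> a \<otimes> b \<otimes> inv a \<otimes> inv b \<in> derived G (carrier G)"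
  unfolding derived_def by (blast intro: generate.incl)

lemma (in group) derived_conj_closed:
  "x \<in> carrier G \<Longrightarrow> h \<in> derived G (carrier G) \<Longrightarrow> x \<otimes> h \<otimes> inv x \<in> derived G (carrier G)"
  by (rule normal.inv_op_closed2[OF derived_self_is_normal])

lemma mult_RG: "x \<otimes>\<^bsub>RG\<^esub> y = x \<circ> y" and one_RG: "\<one>\<^bsub>RG\<^esub> = id"
  by (simp_all add: RG_def)

lemma carrier_RG_iff: "f \<in> carrier RG \<longleftrightarrow> (\<exists>g. homeomorphism UNIV UNIV f g) \<and> rational_map f"
  by (simp add: RG_def rational_homeos_def)

lemma group_RG: "group RG"
proof (rule groupI)
  fix x y assume x: "x \<in> carrier RG" and y: "y \<in> carrier RG"
  obtain gx where gx: "homeomorphism UNIV UNIV x gx" using x by (auto simp: carrier_RG_iff)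
  obtain gy where gy: "homeomorphism UNIV UNIV y gy" using y by (auto simp: carrier_RG_iff)
  have "homeomorphism UNIV UNIV (x \<circ> y) (gy \<circ> gx)" by (rule homeomorphism_compose[OF gy gx])
  moreover have "rational_map (x \<circ> y)" using x y by (simp add: carrier_RG_iff rational_comp)
  ultimately show "x \<otimes>\<^bsub>RG\<^esub> y \<in> carrier RG" by (auto simp: carrier_RG_iff mult_RG)
next
  have "homeomorphism UNIV UNIV id id" using homeomorphism_ident by (simp add: id_def)
  then show "\<one>\<^bsub>RG\<^esub> \<in> carrier RG" by (auto simp: carrier_RG_iff one_RG rational_id)
next
  fix x y z assume "x \<in> carrier RG" "y \<in> carrier RG" "z \<in> carrier RG"
  show "x \<otimes>\<^bsub>RG\<^esub> y \<otimes>\<^bsub>RG\<^esub> z = x \<otimes>\<^bsub>RG\<^esub> (y \<otimes>\<^bsub>RG\<^esub> z)"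
    by (simp add: mult_RG comp_assoc)
next
  fix x assume "x \<in> carrier RG"
  show "\<one>\<^bsub>RG\<^esub> \<otimes>\<^bsub>RG\<^esub> x = x" by (simp add: mult_RG one_RG)
next
  fix x assume x: "x \<in> carrier RG"
  obtain gx where gx: "homeomorphism UNIV UNIV x gx" using x by (auto simp: carrier_RG_iff)
  have "homeomorphism UNIV UNIV gx x" using gx by (rule homeomorphism_symD)
  moreover have "rational_map gx" using rational_inverse[OF gx] x by (simp add: carrier_RG_iff)
  ultimately have "gx \<in> carrier RG" by (auto simp: carrier_RG_iff)
  moreover have "gx \<circ> x = id" using gx by (auto simp: homeomorphism_def fun_eq_iff)
  ultimately show "\<exists>y\<in>carrier RG. y \<otimes>\<^bsub>RG\<^esub> x = \<one>\<^bsub>RG\<^esub>" by (auto simp: mult_RG one_RG)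
qed

interpretation RG: group RG by (rule group_RG)

lemma RG_inverse_pairI:
  assumes "rational_map f" "rational_map g" "\<And>x. g (f x) = x" "\<And>y. f (g y) = y"
  shows "f \<in> carrier RG" "g \<in> carrier RG" "inv\<^bsub>RG\<^esub> f = g"
proof -
  have h: "homeomorphism UNIV UNIV f g"
    using assms rational_continuous by (intro homeomorphismI) auto
  then show f: "f \<in> carrier RG" using assms by (auto simp: carrier_RG_iff)
  have "homeomorphism UNIV UNIV g f" using h by (rule homeomorphism_symD)
  then show g: "g \<in> carrier RG" using assms by (auto simp: carrier_RG_iff)
  have "g \<otimes>\<^bsub>RG\<^esub> f = \<one>\<^bsub>RG\<^esub>" using assms by (simp add: mult_RG one_RG fun_eq_iff)
  then show "inv\<^bsub>RG\<^esub> f = g" using f g by (rule RG.inv_equality)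
qed

lemma inv_RG_apply:
  assumes "f \<in> carrier RG"
  shows "\<And>x. f ((inv\<^bsub>RG\<^esub> f) x) = x" "\<And>x. (inv\<^bsub>RG\<^esub> f) (f x) = x"
proof -
  have "f \<otimes>\<^bsub>RG\<^esub> inv\<^bsub>RG\<^esub> f = \<one>\<^bsub>RG\<^esub>" "inv\<^bsub>RG\<^esub> f \<otimes>\<^bsub>RG\<^esub> f = \<one>\<^bsub>RG\<^esub>"
    using assms by simp_all
  then show "\<And>x. f ((inv\<^bsub>RG\<^esub> f) x) = x" "\<And>x. (inv\<^bsub>RG\<^esub> f) (f x) = x"
    by (simp_all add: mult_RG one_RG fun_eq_iff)
qed

lemma continuous_RG: "f \<in> carrier RG \<Longrightarrow> continuous_on UNIV f"
  by (auto simp: carrier_RG_iff rational_continuous)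

section \<open>Generation by elements of small support\<close>

lemma small_supportI:
  assumes "open E" "closed E" "x \<in> E" "z \<notin> E" "\<And>y. y \<notin> E \<Longrightarrow> f y = y"
  shows "small_support f"
  unfolding small_support_def using assms by blast

lemma displaced_cylinder:
  assumes cont: "continuous_on UNIV f" and moved: "f x0 \<noteq> x0"
  obtains n z where "1 \<le> n"
    "\<And>y. take_seq y n = take_seq x0 n \<Longrightarrow> take_seq (f y) n \<noteq> take_seq x0 n"
    "take_seq z n \<noteq> take_seq x0 n" "z \<notin> f ` {y. take_seq y n = take_seq x0 n}"
proof -
  obtain d where d: "f x0 d \<noteq> x0 d" using moved by (auto simp: fun_eq_iff)
  obtain M where M: "\<And>x y. agree M x y \<Longrightarrow> agree (Suc d) (f x) (f y)"
    using uniformly_continuous_agree[OF cont] by blast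
  define n where "n = max M (Suc (Suc d))"
  have dn: "1 \<le> n" "d \<noteq> n - 1" "n - 1 < n" "d < n" by (auto simp: n_def)
  have moved_d: "f y d \<noteq> x0 d" if "take_seq y n = take_seq x0 n" for y
  proof -
    have "agree n x0 y" using that by (simp add: agree_iff_take_seq)
    then have "agree M x0 y" by (rule agree_mono) (simp add: n_def)
    then have "f x0 d = f y d" using M unfolding agree_def by blast
    then show ?thesis using d by simp
  qed
  have "take_seq (f y) n \<noteq> take_seq x0 n" if "take_seq y n = take_seq x0 n" for y
    using moved_d[OF that] dn nth_take_seq by metis
  moreover
  define z where "z = x0 (n - 1 := \<not> x0 (n - 1))"
  have "take_seq z n \<noteq> take_seq x0 n"
    by (metis dn(3) nth_take_seq fun_upd_same z_def)
  moreover have "z \<notin> f ` {y. take_seq y n = take_seq x0 n}"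
  proof
    assume "z \<in> f ` {y. take_seq y n = take_seq x0 n}"
    then obtain y where "take_seq y n = take_seq x0 n" "f y = z" by blast
    then have "z d \<noteq> x0 d" using moved_d by blast
    then show False using dn(2) by (simp add: z_def)
  qed
  ultimately show ?thesis using that[OF dn(1)] by blast
qed

lemma image_cylinder_RG:
  assumes "f \<in> carrier RG"
  obtains L P where "1 \<le> L" "f ` {y. take_seq y n = v} = {y. P (take_seq y L)}"
proof -
  define g where "g = inv\<^bsub>RG\<^esub> f"
  have fg: "\<And>x. f (g x) = x" and gf: "\<And>x. g (f x) = x"
    using inv_RG_apply[OF assms] by (simp_all add: g_def)
  obtain M where M: "\<And>a b. agree M a b \<Longrightarrow> agree n (g a) (g b)"
    using uniformly_continuous_agree[OF continuous_RG] assms by (fastforce simp: g_def)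
  define P where "P = (\<lambda>w. take_seq (g (prepend w zeros)) n = v)"
  have "y \<in> f ` {y. take_seq y n = v} \<longleftrightarrow> P (take_seq y (Suc M))" for y
  proof -
    have "agree M y (prepend (take_seq y (Suc M)) zeros)" by (simp add: agree_def prepend_def)
    then have "take_seq (g y) n = take_seq (g (prepend (take_seq y (Suc M)) zeros)) n"
      by (subst agree_iff_take_seq[symmetric]) (rule M)
    moreover have "y \<in> f ` {y. take_seq y n = v} \<longleftrightarrow> take_seq (g y) n = v"
      by (metis (mono_tags, lifting) fg gf image_iff mem_Collect_eq)
    ultimately show ?thesis by (simp add: P_def)
  qed
  then have "f ` {y. take_seq y n = v} = {y. P (take_seq y (Suc M))}" by blast
  then show ?thesis by (rule that[rotated]) simp
qed

lemma swap_cylinder_RG: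
  assumes f: "f \<in> carrier RG" and n: "1 \<le> n"
    and disjoint: "\<And>y. take_seq y n = v \<Longrightarrow> take_seq (f y) n \<noteq> v"
  defines "V \<equiv> {y. take_seq y n = v}"
  defines "h \<equiv> \<lambda>y. if y \<in> V then f y else if y \<in> f ` V then (inv\<^bsub>RG\<^esub> f) y else y"
  shows "h \<in> carrier RG" "\<And>y. h (h y) = y"
proof -
  define g where "g = inv\<^bsub>RG\<^esub> f"
  have fg: "\<And>x. f (g x) = x" and gf: "\<And>x. g (f x) = x"
    using inv_RG_apply[OF f] by (simp_all add: g_def)
  obtain L P where L: "1 \<le> L" and fV: "f ` V = {y. P (take_seq y L)}"
    using image_cylinder_RG[OF f] unfolding V_def by blast
  show hh: "h (h y) = y" for y
    using disjoint fg gf by (auto simp: h_def V_def g_def[symmetric] image_iff)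
  have "h = (\<lambda>y. if take_seq y n = v then f y else (\<lambda>y. if P (take_seq y L) then g y else id y) y)"
    unfolding h_def fV by (auto simp: V_def g_def fun_eq_iff)
  moreover have rf: "rational_map f" and rg: "rational_map g"
    using f f[THEN RG.inv_closed] by (simp_all add: carrier_RG_iff g_def)
  moreover have "rational_map (\<lambda>y. if P (take_seq y L) then g y else id y)"
    by (rule rational_piecewise[OF rg rational_id L])
  ultimately have "rational_map h"
    using rational_piecewise[of f _ n "\<lambda>w. w = v"] n by simp
  then show "h \<in> carrier RG"
    using RG_inverse_pairI(1) hh by blast
qed

lemma RG_generated_by_small_support:
  assumes f: "f \<in> carrier RG"
  shows "f \<in> generate RG {f \<in> carrier RG. small_support f}"
proof (cases "f = id")
  case True
  then show ?thesis using generate.one[of RG] by (simp add: one_RG)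
next
  case False
  then obtain x0 where moved: "f x0 \<noteq> x0" by (auto simp: fun_eq_iff)
  obtain n z where n: "1 \<le> n"
    and disjoint: "\<And>y. take_seq y n = take_seq x0 n \<Longrightarrow> take_seq (f y) n \<noteq> take_seq x0 n"
    and z: "take_seq z n \<noteq> take_seq x0 n" "z \<notin> f ` {y. take_seq y n = take_seq x0 n}"
    using displaced_cylinder[OF continuous_RG[OF f] moved] by metis
  define V where "V = {y. take_seq y n = take_seq x0 n}"
  have z: "z \<notin> V" "z \<notin> f ` V" using z by (simp_all add: V_def)
  define h where "h = (\<lambda>y. if y \<in> V then f y else if y \<in> f ` V then (inv\<^bsub>RG\<^esub> f) y else y)"
  have h: "h \<in> carrier RG" "\<And>y. h (h y) = y"
    using swap_cylinder_RG[OF f n disjoint] unfolding h_def V_def by blast+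
  obtain L P where "1 \<le> L" and fV: "f ` V = {y. P (take_seq y L)}"
    unfolding V_def by (rule image_cylinder_RG[OF f])
  have V: "open V" "closed V" "x0 \<in> V"
    using open_take_seq closed_take_seq by (auto simp: V_def)
  have "small_support h"
    using z V open_take_seq[of P L] closed_take_seq[of P L]
    by (intro small_supportI[of "V \<union> f ` V" x0 z]) (auto simp: h_def fV)
  moreover have "small_support (h \<otimes>\<^bsub>RG\<^esub> f)"
  proof (rule small_supportI[of "- V" z x0])
    fix y assume "y \<notin> - V"
    then show "(h \<otimes>\<^bsub>RG\<^esub> f) y = y"
      using disjoint inv_RG_apply[OF f] by (auto simp: h_def mult_RG V_def)
  qed (use V z in auto)
  moreover have "f = h \<otimes>\<^bsub>RG\<^esub> (h \<otimes>\<^bsub>RG\<^esub> f)"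
    using h(2) by (simp add: mult_RG fun_eq_iff)
  ultimately show ?thesis
    using h(1) f by (metis (mono_tags, lifting) RG.m_closed generate.eng generate.incl mem_Collect_eq)
qed

section \<open>Elements supported in the cylinder of 01 are commutators\<close>

definition first_one :: "cantor \<Rightarrow> nat" where "first_one x = (LEAST i. x i)"

definition after_zeros :: "(cantor \<Rightarrow> cantor) \<Rightarrow> cantor \<Rightarrow> cantor" where
  "after_zeros H x = (if (\<exists>i. x i) \<and> \<not> x 0
     then prepend (replicate (first_one x - 1) False) (H (shift (first_one x - 1) x)) else x)"

lemma first_one_eq: "x k \<Longrightarrow> (\<forall>i<k. \<not> x i) \<Longrightarrow> first_one x = k"
  unfolding first_one_def by (rule Least_equality) (auto simp: not_less[symmetric])

lemma first_one_props: "\<exists>i. x i \<Longrightarrow> x (first_one x) \<and> (\<forall>i<first_one x. \<not> x i)"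
  unfolding first_one_def by (metis LeastI_ex not_less_Least)

lemma after_zeros_fix: "x 0 \<or> (\<forall>i. \<not> x i) \<Longrightarrow> after_zeros H x = x"
  by (auto simp: after_zeros_def)

(* Inl 0: start; Inl 1: inside the leading zeros, one zero behind; Inl 2: copying;
   Inr: running the transducer of H, which was started on the word 01. *)
definition zeros_trans :: "('s \<Rightarrow> bool \<Rightarrow> 's) \<Rightarrow> 's \<Rightarrow> (nat + 's) \<Rightarrow> bool \<Rightarrow> (nat + 's)" where
  "zeros_trans t s q a = (case q of Inl n \<Rightarrow> (if n = 0 then (if a then Inl 2 else Inl 1)
       else if n = 1 then (if a then Inr (foldl t s [False, True]) else Inl 1) else Inl 2)
     | Inr p \<Rightarrow> Inr (t p a))"

definition zeros_out :: "('s \<Rightarrow> bool \<Rightarrow> 's) \<Rightarrow> ('s \<Rightarrow> bool \<Rightarrow> bool list) \<Rightarrow> 's \<Rightarrow> (nat + 's) \<Rightarrow> bool \<Rightarrow> bool list" where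
  "zeros_out t out s q a = (case q of Inl n \<Rightarrow> (if n = 0 then (if a then [True] else [])
       else if n = 1 then (if a then out_word t out s [False, True] else [False]) else [a])
     | Inr p \<Rightarrow> out p a)"

context
  fixes t :: "'s \<Rightarrow> bool \<Rightarrow> 's" and out :: "'s \<Rightarrow> bool \<Rightarrow> bool list" and s :: 's
begin

lemma zeros_trans_simps:
  "zeros_trans t s (Inl 0) a = (if a then Inl 2 else Inl (Suc 0))"
  "zeros_trans t s (Inl (Suc 0)) a = (if a then Inr (foldl t s [False, True]) else Inl (Suc 0))"
  "zeros_trans t s (Inl 2) a = Inl 2"
  "zeros_trans t s (Inr p) a = Inr (t p a)"
  "zeros_out t out s (Inl 0) a = (if a then [True] else [])"
  "zeros_out t out s (Inl (Suc 0)) a = (if a then out_word t out s [False, True] else [False])"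
  "zeros_out t out s (Inl 2) a = [a]"
  "zeros_out t out s (Inr p) a = out p a"
  by (simp_all add: zeros_trans_def zeros_out_def)

lemma zeros_run_Inr: "foldl (zeros_trans t s) (Inr p) v = Inr (foldl t p v)" "out_word (zeros_trans t s) (zeros_out t out s) (Inr p) v = out_word t out p v"
  by (induction v arbitrary: p) (simp_all add: zeros_trans_simps)

lemma zeros_run_copy: "foldl (zeros_trans t s) (Inl 2) v = Inl 2" "out_word (zeros_trans t s) (zeros_out t out s) (Inl 2) v = v"
  by (induction v) (simp_all add: zeros_trans_simps)

lemma zeros_run_waiting: "foldl (zeros_trans t s) (Inl (Suc 0)) (replicate j False) = Inl (Suc 0)"
  "out_word (zeros_trans t s) (zeros_out t out s) (Inl (Suc 0)) (replicate j False) = replicate j False"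
  by (induction j) (simp_all add: zeros_trans_simps)

lemma zeros_run_waiting_True: "out_word (zeros_trans t s) (zeros_out t out s) (Inl (Suc 0)) (True # w) = out_word t out s (False # True # w)"
proof -
  have a: "zeros_out t out s (Inl (Suc 0)) True = out_word t out s [False, True]" by (simp add: zeros_out_def)
  have b: "zeros_trans t s (Inl (Suc 0)) True = Inr (foldl t s [False, True])" by (simp add: zeros_trans_def)
  have "out_word (zeros_trans t s) (zeros_out t out s) (Inl (Suc 0)) (True # w) = out_word t out s [False, True] @ out_word t out (foldl t s [False, True]) w"
    by (simp only: out_word.simps a b zeros_run_Inr)
  also have "\<dots> = out_word t out s ([False, True] @ w)" by (simp only: out_word_append)
  finally show ?thesis by simp
qed

lemma zeros_run_start:
  "out_word (zeros_trans t s) (zeros_out t out s) (Inl 0) (True # w) = True # w"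
  "out_word (zeros_trans t s) (zeros_out t out s) (Inl 0) (False # replicate j False) = replicate j False"
  "out_word (zeros_trans t s) (zeros_out t out s) (Inl 0) (False # replicate j False @ True # w) = replicate j False @ out_word t out s (False # True # w)"
proof -
  show "out_word (zeros_trans t s) (zeros_out t out s) (Inl 0) (True # w) = True # w"
    by (simp add: zeros_trans_simps zeros_run_copy)
  show "out_word (zeros_trans t s) (zeros_out t out s) (Inl 0) (False # replicate j False) = replicate j False"
    using zeros_run_waiting by (simp add: zeros_trans_simps)
  have "out_word (zeros_trans t s) (zeros_out t out s) (Inl (Suc 0)) (replicate j False @ True # w) = replicate j False @ out_word t out s (False # True # w)"
    by (simp only: out_word_append zeros_run_waiting zeros_run_waiting_True)
  then show "out_word (zeros_trans t s) (zeros_out t out s) (Inl 0) (False # replicate j False @ True # w) = replicate j False @ out_word t out s (False # True # w)"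
    by (simp add: zeros_trans_simps)
qed

lemma finite_reach_zeros_trans:
  assumes "finite (range (foldl t s))"
  shows "finite (range (foldl (zeros_trans t s) (Inl 0)))"
proof (rule finite_reach_invariant[where I = "Inl ` {0, 1, 2} \<union> Inr ` range (foldl t s)"])
  have "t (t s False) True \<in> range (foldl t s)" using rangeI[of "foldl t s" "[False, True]"] by simp
  then show "zeros_trans t s q a \<in> Inl ` {0, 1, 2} \<union> Inr ` range (foldl t s)"
    if "q \<in> Inl ` {0, 1, 2} \<union> Inr ` range (foldl t s)" for q a
    using that range_foldl_step[of _ t s a] by (auto simp: zeros_trans_def)
qed (use assms in auto)

end

lemma take_seq_first_one_decomp:
  assumes "1 \<le> k" "x k" "\<forall>i<k. \<not> x i"
  shows "take_seq x (Suc (k + j)) = False # replicate (k - 1) False @ True # take_seq (shift (k + 1) x) j"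
    "take_seq (shift (k - 1) x) (2 + j) = False # True # take_seq (shift (k + 1) x) j"
proof -
  have "take_seq x (k + 1) = take_seq x k @ [x k]" by (simp add: take_seq_Suc)
  also have "\<dots> = replicate k False @ [True]" using assms by (simp add: take_seq_replicate)
  also have "\<dots> = False # replicate (k - 1) False @ [True]" using assms(1)
    by (metis Suc_diff_1 One_nat_def less_eq_Suc_le replicate_Suc append_Cons)
  finally have a: "take_seq x (k + 1) = False # replicate (k - 1) False @ [True]" .
  have "take_seq x (Suc (k + j)) = take_seq x ((k + 1) + j)" by simp
  also have "\<dots> = take_seq x (k + 1) @ take_seq (shift (k + 1) x) j" by (rule take_seq_add)
  finally show "take_seq x (Suc (k + j)) = False # replicate (k - 1) False @ True # take_seq (shift (k + 1) x) j"
    using a by simp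
  have b: "take_seq (shift (k - 1) x) 2 = [False, True]"
    using assms by (simp add: take_seq_def shift_def numeral_2_eq_2)
  have c: "shift 2 (shift (k - 1) x) = shift (k + 1) x" using assms(1) by (simp add: shift_shift)
  show "take_seq (shift (k - 1) x) (2 + j) = False # True # take_seq (shift (k + 1) x) j"
    using take_seq_add[of "shift (k - 1) x" 2 j] b c by simp
qed

lemma zeros_out_word_leading_one:
  "x 0 \<Longrightarrow> out_word (zeros_trans t s) (zeros_out t out s) (Inl 0) (take_seq x n) = take_seq x n"
  by (cases n) (simp, simp add: take_seq_Suc_Cons zeros_run_start del: out_word.simps)

lemma zeros_out_word_leading_zeros:
  assumes "\<forall>i<Suc j. \<not> x i"
  shows "out_word (zeros_trans t s) (zeros_out t out s) (Inl 0) (take_seq x (Suc j)) = replicate j False"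
proof -
  have "take_seq x (Suc j) = False # replicate j False" using assms by (simp add: take_seq_replicate)
  then show ?thesis by (simp add: zeros_run_start del: out_word.simps)
qed

lemma zeros_out_word_first_one:
  assumes "1 \<le> k" "x k" "\<forall>i<k. \<not> x i"
  shows "out_word (zeros_trans t s) (zeros_out t out s) (Inl 0) (take_seq x (Suc (k + j)))
    = replicate (k - 1) False @ out_word t out s (take_seq (shift (k - 1) x) (2 + j))"
  using take_seq_first_one_decomp[OF assms, of j] by (simp add: zeros_run_start del: out_word.simps)

lemma computes_after_zeros:
  assumes c: "computes t out s H"
  shows "computes (zeros_trans t s) (zeros_out t out s) (Inl 0) (after_zeros H)"
  unfolding computes_def
proof (intro allI)
  fix x
  let ?lo = "out_word (zeros_trans t s) (zeros_out t out s) (Inl 0)"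
  show "(\<forall>n. prefix_of (?lo (take_seq x n)) (after_zeros H x)) \<and> (\<forall>M. \<exists>n. M \<le> length (?lo (take_seq x n)))"
  proof (cases "x 0 \<or> (\<forall>i. \<not> x i)")
    case True
    then have fixed: "after_zeros H x = x" by (simp add: after_zeros_fix)
    have lo: "?lo (take_seq x (Suc n)) \<in> {take_seq x (Suc n), take_seq x n}" for n
    proof (cases "x 0")
      case True
      then show ?thesis by (simp add: zeros_out_word_leading_one)
    next
      case False
      then have zero: "\<forall>i. \<not> x i" using \<open>x 0 \<or> (\<forall>i. \<not> x i)\<close> by blast
      then have "?lo (take_seq x (Suc n)) = replicate n False"
        by (intro zeros_out_word_leading_zeros) blast
      then show ?thesis using zero by (simp add: take_seq_replicate)
    qed
    have "prefix_of (?lo (take_seq x n)) (after_zeros H x)" for n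
      using lo[of "n - 1"] by (cases n) (auto simp: fixed prefix_of_take_seq_self)
    moreover have "\<exists>n. M \<le> length (?lo (take_seq x n))" for M
      using lo[of M] by (metis empty_iff insert_iff length_take_seq le_SucI order_refl)
    ultimately show ?thesis by blast
  next
    case False
    define k where "k = first_one x"
    have kp: "x k" "\<forall>i<k. \<not> x i" using first_one_props False by (auto simp: k_def)
    have k1: "1 \<le> k" using kp False by (cases k) auto
    have ph: "after_zeros H x = prepend (replicate (k - 1) False) (H (shift (k - 1) x))"
      using False by (simp add: after_zeros_def k_def)
    have lo: "?lo (take_seq x (Suc (k + j)))
        = replicate (k - 1) False @ out_word t out s (take_seq (shift (k - 1) x) (2 + j))" for j
      by (rule zeros_out_word_first_one[OF k1 kp])
    have "prefix_of (?lo (take_seq x n)) (after_zeros H x)" for n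
    proof (cases "n \<le> k")
      case True
      show ?thesis
      proof (cases n)
        case (Suc j)
        have "?lo (take_seq x n) = replicate j False"
          unfolding Suc using kp True Suc by (intro zeros_out_word_leading_zeros) auto
        then show ?thesis using True Suc by (auto simp: ph prefix_of_def)
      qed simp
    next
      case False
      then obtain j where n: "n = Suc (k + j)" by (metis less_imp_Suc_add not_le add_Suc_right)
      have "prefix_of (out_word t out s (take_seq (shift (k - 1) x) (2 + j))) (H (shift (k - 1) x))"
        using c by (simp add: computes_def)
      then show ?thesis
        unfolding n lo by (simp add: ph prefix_of_prepend_append)
    qed
    moreover have "\<exists>n. M \<le> length (?lo (take_seq x n))" for M
    proof -
      obtain N where N: "M \<le> length (out_word t out s (take_seq (shift (k - 1) x) N))"
        using c unfolding computes_def by blast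
      moreover have "length (out_word t out s (take_seq (shift (k - 1) x) N))
          \<le> length (out_word t out s (take_seq (shift (k - 1) x) (2 + N)))"
        by (rule out_word_take_seq_mono) simp
      ultimately show ?thesis
        using lo[of N] by (intro exI[of _ "Suc (k + N)"]) simp
    qed
    ultimately show ?thesis by blast
  qed
qed

lemma rational_after_zeros: assumes "rational_map H" shows "rational_map (after_zeros H)"
proof -
  obtain t :: "nat \<Rightarrow> bool \<Rightarrow> nat" and out s where ts: "finite (range (foldl t s))" "computes t out s H"
    using rational_map_computes[OF assms] by blast
  show ?thesis using computes_rational_map[OF finite_reach_zeros_trans[OF ts(1)] computes_after_zeros[OF ts(2)]] .
qed

definition sigma :: "cantor \<Rightarrow> cantor" where
  "sigma x = (if \<not> x 0 then prepend [False] x else if \<not> x 1 then prepend [False, True] (shift 2 x) else shift 1 x)"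

definition sigma_inv :: "cantor \<Rightarrow> cantor" where
  "sigma_inv x = (if \<not> x 0 \<and> \<not> x 1 then shift 1 x else if \<not> x 0 then prepend [True, False] (shift 2 x) else prepend [True] x)"

lemma sigma_sigma_inv: "sigma (sigma_inv x) = x"
  by (rule cantor_eq_by_cases) (auto simp: sigma_def sigma_inv_def prepend_singleton_nth prepend_pair_nth shift_nth)

lemma sigma_inv_sigma: "sigma_inv (sigma x) = x"
  by (rule cantor_eq_by_cases) (auto simp: sigma_def sigma_inv_def prepend_singleton_nth prepend_pair_nth shift_nth)

lemma sigma_block_form: "sigma = (\<lambda>x. prepend ((\<lambda>w. if \<not> w ! 0 then [False, False, w ! 1] else if \<not> w ! 1 then [False, True] else [True]) (take_seq x 2)) (shift 2 x))"
proof (rule ext)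
  fix x
  have p: "take_seq x 2 ! 0 = x 0" "take_seq x 2 ! 1 = x 1" by simp_all
  show "sigma x = prepend ((\<lambda>w. if \<not> w ! 0 then [False, False, w ! 1] else if \<not> w ! 1 then [False, True] else [True]) (take_seq x 2)) (shift 2 x)"
    unfolding p
    by (rule cantor_eq_by_cases) (auto simp: sigma_def prepend_singleton_nth prepend_pair_nth shift_nth prepend_def)
qed

lemma sigma_inv_block_form: "sigma_inv = (\<lambda>x. prepend ((\<lambda>w. if \<not> w ! 0 \<and> \<not> w ! 1 then [False] else if \<not> w ! 0 then [True, False] else [True, True, w ! 1]) (take_seq x 2)) (shift 2 x))"
proof (rule ext)
  fix x
  have p: "take_seq x 2 ! 0 = x 0" "take_seq x 2 ! 1 = x 1" by simp_all
  show "sigma_inv x = prepend ((\<lambda>w. if \<not> w ! 0 \<and> \<not> w ! 1 then [False] else if \<not> w ! 0 then [True, False] else [True, True, w ! 1]) (take_seq x 2)) (shift 2 x)"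
    unfolding p
    by (rule cantor_eq_by_cases) (auto simp: sigma_inv_def prepend_singleton_nth prepend_pair_nth shift_nth prepend_def)
qed

lemma sigma_RG: "sigma \<in> carrier RG" "sigma_inv \<in> carrier RG" "inv\<^bsub>RG\<^esub> sigma = sigma_inv"
proof -
  have "rational_map sigma" unfolding sigma_block_form by (rule rational_block_form) simp
  moreover have "rational_map sigma_inv" unfolding sigma_inv_block_form by (rule rational_block_form) simp
  ultimately show "sigma \<in> carrier RG" "sigma_inv \<in> carrier RG" "inv\<^bsub>RG\<^esub> sigma = sigma_inv"
    using RG_inverse_pairI[of sigma sigma_inv] sigma_inv_sigma sigma_sigma_inv by auto
qed

definition in_cyl01 :: "cantor \<Rightarrow> bool" where "in_cyl01 y \<longleftrightarrow> \<not> y 0 \<and> y 1"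

lemma maps_cyl01:
  assumes supp: "\<And>y. \<not> in_cyl01 y \<Longrightarrow> H y = y" and inv: "\<And>y. H' (H y) = y" and y: "in_cyl01 y"
  shows "in_cyl01 (H y)"
proof (rule ccontr)
  assume "\<not> in_cyl01 (H y)"
  then have "H (H y) = H y" by (rule supp)
  then have "H' (H (H y)) = H' (H y)" by simp
  then have "H y = y" by (simp add: inv)
  then show False using \<open>\<not> in_cyl01 (H y)\<close> y by simp
qed

lemma after_zeros_cyl01: "in_cyl01 x \<Longrightarrow> after_zeros H x = H x"
proof -
  assume a: "in_cyl01 x"
  then have "first_one x = 1" by (intro first_one_eq) (auto simp: in_cyl01_def)
  then show ?thesis using a by (auto simp: after_zeros_def in_cyl01_def)
qed

lemma after_zeros_shift_zero:
  assumes "\<not> x 0" "\<not> x 1"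
  shows "after_zeros H x = prepend [False] (after_zeros H (shift 1 x))"
proof (cases "\<exists>i. x i")
  case False
  then have "after_zeros H x = x" "after_zeros H (shift 1 x) = shift 1 x" by (auto simp: after_zeros_def shift_def)
  moreover have "prepend [False] (shift 1 x) = x"
    using assms by (intro cantor_eq_by_cases) (simp_all add: prepend_singleton_nth shift_nth)
  ultimately show ?thesis by simp
next
  case True
  define k where "k = first_one x"
  have kp: "x k" "\<forall>i<k. \<not> x i" using first_one_props[OF True] by (simp_all add: k_def)
  have k2: "2 \<le> k" using kp assms by (cases k; cases "k - 1") auto
  have "shift 1 x (k - 1)" using kp k2 by (simp add: shift_def)
  then have s1: "\<exists>i. shift 1 x i" "\<not> shift 1 x 0" using assms by (auto simp: shift_def)
  have lz1: "first_one (shift 1 x) = k - 1"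
    using kp k2 by (intro first_one_eq) (auto simp: shift_def)
  obtain m where km: "k = Suc (Suc m)" using k2 by (metis add_2_eq_Suc le_Suc_ex)
  have "after_zeros H (shift 1 x) = prepend (replicate (k - 2) False) (H (shift (k - 1) x))"
    using s1 lz1 by (simp add: after_zeros_def shift_shift km)
  moreover have "after_zeros H x = prepend (replicate (k - 1) False) (H (shift (k - 1) x))"
    using True assms by (simp add: after_zeros_def k_def)
  moreover have "k - 1 = Suc (k - 2)" using k2 by simp
  ultimately show ?thesis by (simp add: prepend_replicate_Suc)
qed

lemma after_zeros_head_False:
  assumes m: "\<And>y. in_cyl01 y \<Longrightarrow> in_cyl01 (H y)" and x0: "\<not> x 0"
  shows "\<not> after_zeros H x 0"
proof (cases "\<exists>i. x i")
  case False then show ?thesis using x0 by (simp add: after_zeros_def)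
next
  case True
  define k where "k = first_one x"
  have kp: "x k" "\<forall>i<k. \<not> x i" using first_one_props[OF True] by (simp_all add: k_def)
  have ph: "after_zeros H x = prepend (replicate (k - 1) False) (H (shift (k - 1) x))"
    using True x0 by (simp add: after_zeros_def k_def)
  show ?thesis
  proof (cases "k = 1")
    case True
    then have "in_cyl01 x" using kp x0 by (simp add: in_cyl01_def)
    then have "in_cyl01 (H x)" by (rule m)
    then show ?thesis using ph True by (simp add: in_cyl01_def)
  next
    case False
    then have "0 < k - 1" using kp x0 by (cases k) auto
    then show ?thesis using ph by simp
  qed
qed

lemma after_zeros_inv:
  assumes m: "\<And>y. in_cyl01 y \<Longrightarrow> in_cyl01 (H y)" and inv: "\<And>y. H' (H y) = y"
  shows "after_zeros H' (after_zeros H x) = x"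
proof (cases "x 0 \<or> (\<forall>i. \<not> x i)")
  case True then show ?thesis by (simp add: after_zeros_fix)
next
  case False
  then have x0: "\<not> x 0" and ex: "\<exists>i. x i" by auto
  define k where "k = first_one x"
  have kp: "x k" "\<forall>i<k. \<not> x i" using first_one_props[OF ex] by (simp_all add: k_def)
  have k1: "1 \<le> k" using kp x0 by (cases k) auto
  define y where "y = shift (k - 1) x"
  have y01: "in_cyl01 y" using kp k1 by (simp add: in_cyl01_def y_def shift_def)
  then have hy: "in_cyl01 (H y)" by (rule m)
  define z where "z = prepend (replicate (k - 1) False) (H y)"
  have ph: "after_zeros H x = z" using ex x0 by (simp add: after_zeros_def k_def z_def y_def)
  have zk: "z k" using hy k1 prepend_ge[of "replicate (k - 1) False" "H y" 1] by (simp add: z_def in_cyl01_def)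
  have zlt: "\<forall>i<k. \<not> z i"
  proof (intro allI impI)
    fix i assume "i < k"
    show "\<not> z i"
    proof (cases "i < k - 1")
      case True then show ?thesis by (simp add: z_def)
    next
      case False
      then have "i = length (replicate (k - 1) False) + 0" using \<open>i < k\<close> by simp
      then show ?thesis using hy by (simp only: z_def prepend_ge) (simp add: in_cyl01_def)
    qed
  qed
  have lzz: "first_one z = k" using zk zlt by (rule first_one_eq)
  have z0: "\<not> z 0" using zlt k1 by simp
  have sz: "shift (k - 1) z = H y" using shift_prepend[of "replicate (k - 1) False" "H y"] by (simp add: z_def)
  have "after_zeros H' z = prepend (replicate (k - 1) False) (H' (H y))"
    using zk z0 lzz sz by (auto simp: after_zeros_def)
  also have "\<dots> = prepend (take_seq x (k - 1)) (shift (k - 1) x)"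
    using kp by (simp add: inv y_def take_seq_replicate)
  also have "\<dots> = x" by (rule prepend_take_seq_shift)
  finally show ?thesis using ph by simp
qed

lemma after_zeros_commutator:
  assumes suppH: "\<And>y. \<not> in_cyl01 y \<Longrightarrow> H y = y" and suppH': "\<And>y. \<not> in_cyl01 y \<Longrightarrow> H' y = y"
    and i1: "\<And>y. H' (H y) = y" and i2: "\<And>y. H (H' y) = y"
  shows "after_zeros H (sigma (after_zeros H' (sigma_inv y))) = H y"
proof -
  have mH: "\<And>y. in_cyl01 y \<Longrightarrow> in_cyl01 (H y)" using maps_cyl01[OF suppH i1] .
  have mH': "\<And>y. in_cyl01 y \<Longrightarrow> in_cyl01 (H' y)" using maps_cyl01[OF suppH' i2] .
  consider (a) "in_cyl01 y" | (b) "y 0" | (c) "\<not> y 0" "\<not> y 1" unfolding in_cyl01_def by blast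
  then show ?thesis
  proof cases
    case a
    then have t: "sigma_inv y = prepend [True, False] (shift 2 y)" by (simp add: sigma_inv_def in_cyl01_def)
    then have "after_zeros H' (sigma_inv y) = sigma_inv y" by (intro after_zeros_fix) (simp add: prepend_pair_nth)
    moreover have "sigma (sigma_inv y) = y" by (rule sigma_sigma_inv)
    ultimately show ?thesis using a by (simp add: after_zeros_cyl01)
  next
    case b
    then have "\<not> in_cyl01 y" by (simp add: in_cyl01_def)
    have t: "sigma_inv y = prepend [True] y" using b by (simp add: sigma_inv_def)
    then have "after_zeros H' (sigma_inv y) = sigma_inv y" by (intro after_zeros_fix) (simp add: prepend_singleton_nth)
    moreover have "sigma (sigma_inv y) = y" by (rule sigma_sigma_inv)
    moreover have "after_zeros H y = y" using b by (simp add: after_zeros_fix)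
    ultimately show ?thesis using suppH[OF \<open>\<not> in_cyl01 y\<close>] by simp
  next
    case c
    then have "\<not> in_cyl01 y" by (simp add: in_cyl01_def)
    have t: "sigma_inv y = shift 1 y" using c by (simp add: sigma_inv_def)
    have s0: "\<not> shift 1 y 0" using c by (simp add: shift_def)
    have z0: "\<not> after_zeros H' (shift 1 y) 0" using after_zeros_head_False[of H' "shift 1 y"] mH' s0 by blast
    have "sigma (after_zeros H' (sigma_inv y)) = prepend [False] (after_zeros H' (shift 1 y))"
      using z0 by (simp add: t sigma_def)
    also have "\<dots> = after_zeros H' y" using after_zeros_shift_zero[OF c, of H'] by simp
    finally have "after_zeros H (sigma (after_zeros H' (sigma_inv y))) = after_zeros H (after_zeros H' y)" by simp
    also have "\<dots> = y" by (rule after_zeros_inv[OF mH' i2])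
    finally show ?thesis using suppH[OF \<open>\<not> in_cyl01 y\<close>] by simp
  qed
qed

lemma derived_if_supported_cyl01:
  assumes H: "H \<in> carrier RG" and supp: "\<And>y. \<not> in_cyl01 y \<Longrightarrow> H y = y"
  shows "H \<in> derived RG (carrier RG)"
proof -
  define H' where "H' = inv\<^bsub>RG\<^esub> H"
  have i1: "\<And>y. H' (H y) = y" and i2: "\<And>y. H (H' y) = y"
    using inv_RG_apply[OF H] by (simp_all add: H'_def)
  have supp': "\<And>y. \<not> in_cyl01 y \<Longrightarrow> H' y = y"
    using supp i1 by metis
  have "rational_map (after_zeros H)" "rational_map (after_zeros H')"
    using H H[THEN RG.inv_closed] by (simp_all add: carrier_RG_iff H'_def rational_after_zeros)
  then have after_zeros_H: "after_zeros H \<in> carrier RG" "inv\<^bsub>RG\<^esub> (after_zeros H) = after_zeros H'"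
    using RG_inverse_pairI after_zeros_inv[OF maps_cyl01[OF supp i1] i1]
      after_zeros_inv[OF maps_cyl01[OF supp' i2] i2] by blast+
  have "H = after_zeros H \<otimes>\<^bsub>RG\<^esub> sigma \<otimes>\<^bsub>RG\<^esub> inv\<^bsub>RG\<^esub> (after_zeros H) \<otimes>\<^bsub>RG\<^esub> inv\<^bsub>RG\<^esub> sigma"
    using after_zeros_commutator[OF supp supp' i1 i2]
    by (simp add: after_zeros_H(2) sigma_RG(3) mult_RG fun_eq_iff)
  then show ?thesis
    using RG.commutator_in_derived[OF after_zeros_H(1) sigma_RG(1)] by simp
qed

section \<open>Small supports can be conjugated into the cylinder of 01\<close>

definition flip_prefix :: "bool list \<Rightarrow> cantor \<Rightarrow> cantor" where
  "flip_prefix u x = (\<lambda>i. if i < length u then x i \<noteq> u ! i else x i)"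

lemma flip_prefix_flip_prefix: "flip_prefix u (flip_prefix u x) = x"
  by (auto simp: flip_prefix_def fun_eq_iff)

lemma flip_prefix_block_form: "u \<noteq> [] \<Longrightarrow> flip_prefix u = (\<lambda>x. prepend ((\<lambda>w. map2 (\<noteq>) w u) (take_seq x (length u))) (shift (length u) x))"
  by (auto simp: flip_prefix_def fun_eq_iff prepend_def shift_def)

lemma flip_prefix_RG: "flip_prefix u \<in> carrier RG"
proof (cases "u = []")
  case True
  then have "flip_prefix u = id" by (simp add: flip_prefix_def fun_eq_iff)
  then show ?thesis using RG.one_closed by (simp add: one_RG)
next
  case False
  then have r: "rational_map (flip_prefix u)" unfolding flip_prefix_block_form[OF False] by (intro rational_block_form) (simp add: Suc_leI)
  show ?thesis using RG_inverse_pairI[OF r r flip_prefix_flip_prefix flip_prefix_flip_prefix] by simp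
qed

lemma sigma_inv_pow_RG: "sigma_inv ^^ k \<in> carrier RG"
proof (induction k)
  case 0 then show ?case using RG.one_closed by (simp add: one_RG id_def)
next
  case (Suc k)
  have "sigma_inv \<otimes>\<^bsub>RG\<^esub> (sigma_inv ^^ k) \<in> carrier RG" using sigma_RG(2) Suc by simp
  then show ?case by (simp only: mult_RG funpow.simps(2))
qed

lemma sigma_inv_pow_head: "\<not> (\<forall>i<Suc k. \<not> y i) \<Longrightarrow> (sigma_inv ^^ k) y 0"
proof (induction k arbitrary: y)
  case 0 then show ?case by simp
next
  case (Suc k)
  have "\<not> (\<forall>i<Suc k. \<not> sigma_inv y i)"
  proof (cases "y 0")
    case True
    then have "sigma_inv y 0" by (simp add: sigma_inv_def prepend_singleton_nth)
    then show ?thesis by blast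
  next
    case y0: False
    show ?thesis
    proof (cases "y 1")
      case True
      then have "sigma_inv y 0" using y0 by (simp add: sigma_inv_def prepend_pair_nth)
      then show ?thesis by blast
    next
      case False
      obtain i where i: "i < Suc (Suc k)" "y i" using Suc.prems by blast
      then obtain j where j: "i = Suc j" using y0 by (cases i) auto
      have "sigma_inv y j = y i" using y0 False by (simp add: sigma_inv_def shift_def j)
      then show ?thesis using i j by auto
    qed
  qed
  then have "(sigma_inv ^^ k) (sigma_inv y) 0" by (rule Suc.IH)
  then show ?case by (simp only: funpow_Suc_right comp_apply)
qed

definition to_cyl01 :: "bool list \<Rightarrow> cantor \<Rightarrow> cantor" where
  "to_cyl01 u = flip_prefix [False, True] \<circ> sigma \<circ> flip_prefix [True] \<circ> (sigma_inv ^^ (length u - 1)) \<circ> flip_prefix u"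

lemma to_cyl01_RG: "to_cyl01 u \<in> carrier RG"
proof -
  have "flip_prefix [False, True] \<otimes>\<^bsub>RG\<^esub> sigma \<otimes>\<^bsub>RG\<^esub> flip_prefix [True] \<otimes>\<^bsub>RG\<^esub> (sigma_inv ^^ (length u - 1)) \<otimes>\<^bsub>RG\<^esub> flip_prefix u \<in> carrier RG"
    using flip_prefix_RG sigma_RG sigma_inv_pow_RG by simp
  then show ?thesis by (simp add: to_cyl01_def mult_RG)
qed

lemma to_cyl01_outside:
  assumes u: "u \<noteq> []" and x: "\<not> prefix_of u x"
  shows "in_cyl01 (to_cyl01 u x)"
proof -
  define y1 where "y1 = flip_prefix u x"
  have "\<not> (\<forall>i<length u. \<not> y1 i)"
    using x by (auto simp: y1_def flip_prefix_def prefix_of_def)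
  moreover have "Suc (length u - 1) = length u" using u by simp
  ultimately have y2: "(sigma_inv ^^ (length u - 1)) y1 0" using sigma_inv_pow_head[of "length u - 1" y1] by simp
  define y3 where "y3 = flip_prefix [True] ((sigma_inv ^^ (length u - 1)) y1)"
  have y3: "\<not> y3 0" using y2 by (simp add: y3_def flip_prefix_def)
  have "sigma y3 0 = False" "sigma y3 1 = False" using y3 by (simp_all add: sigma_def prepend_def)
  then show ?thesis by (simp add: to_cyl01_def y1_def y3_def in_cyl01_def flip_prefix_def)
qed

lemma small_support_fixes_cylinder:
  assumes "small_support f"
  obtains u where "u \<noteq> []" "\<And>y. prefix_of u y \<Longrightarrow> f y = y"
proof -
  obtain E where E: "closed E" "E \<noteq> UNIV" "\<And>x. x \<notin> E \<Longrightarrow> f x = x"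
    using assms unfolding small_support_def by blast
  obtain p where p: "p \<notin> E" using E(2) by blast
  obtain n where n: "{y. agree n p y} \<subseteq> - E"
    using agree_set_subset_open[of "- E" p] E(1) p by (auto simp: open_Compl)
  show ?thesis
  proof (rule that[of "take_seq p (Suc n)"])
    fix y assume "prefix_of (take_seq p (Suc n)) y"
    then have "agree n p y" by (simp add: prefix_of_def agree_def)
    then show "f y = y" using n E(3) by blast
  qed (simp add: take_seq_def)
qed

lemma to_cyl01_conj_supported:
  assumes f: "f \<in> carrier RG" and u: "u \<noteq> []" and id_on_u: "\<And>y. prefix_of u y \<Longrightarrow> f y = y"
    and y: "\<not> in_cyl01 y"
  shows "(to_cyl01 u \<otimes>\<^bsub>RG\<^esub> f \<otimes>\<^bsub>RG\<^esub> inv\<^bsub>RG\<^esub> to_cyl01 u) y = y"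
proof -
  define c where "c = to_cyl01 u"
  define z where "z = (inv\<^bsub>RG\<^esub> c) y"
  have cz: "c z = y" using inv_RG_apply[OF to_cyl01_RG] by (simp add: z_def c_def)
  then have "prefix_of u z" using to_cyl01_outside[OF u, of z] y by (auto simp: c_def)
  then show ?thesis using id_on_u cz by (simp add: c_def[symmetric] z_def[symmetric] mult_RG)
qed

lemma small_support_derived:
  assumes f: "f \<in> carrier RG" and "small_support f"
  shows "f \<in> derived RG (carrier RG)"
proof -
  obtain u where u: "u \<noteq> []" and id_on_u: "\<And>y. prefix_of u y \<Longrightarrow> f y = y"
    using small_support_fixes_cylinder[OF assms(2)] by metis
  define c where "c = to_cyl01 u"
  have c: "c \<in> carrier RG" by (simp add: c_def to_cyl01_RG)
  have "c \<otimes>\<^bsub>RG\<^esub> f \<otimes>\<^bsub>RG\<^esub> inv\<^bsub>RG\<^esub> c \<in> derived RG (carrier RG)"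
    using c f to_cyl01_conj_supported[OF f u id_on_u]
    by (intro derived_if_supported_cyl01) (simp_all add: c_def)
  then have "inv\<^bsub>RG\<^esub> c \<otimes>\<^bsub>RG\<^esub> (c \<otimes>\<^bsub>RG\<^esub> f \<otimes>\<^bsub>RG\<^esub> inv\<^bsub>RG\<^esub> c) \<otimes>\<^bsub>RG\<^esub> inv\<^bsub>RG\<^esub> (inv\<^bsub>RG\<^esub> c) \<in> derived RG (carrier RG)"
    by (rule RG.derived_conj_closed[OF RG.inv_closed[OF c]])
  moreover have "inv\<^bsub>RG\<^esub> c \<otimes>\<^bsub>RG\<^esub> (c \<otimes>\<^bsub>RG\<^esub> f \<otimes>\<^bsub>RG\<^esub> inv\<^bsub>RG\<^esub> c) \<otimes>\<^bsub>RG\<^esub> inv\<^bsub>RG\<^esub> (inv\<^bsub>RG\<^esub> c) = f"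
    using c inv_RG_apply[OF c] by (simp add: mult_RG comp_def)
  ultimately show ?thesis by simp
qed

theorem proposition2p8:
  shows "group RG
    \<and> generate RG {f \<in> carrier RG. small_support f} = carrier RG
    \<and> derived RG (carrier RG) = carrier RG"
proof (intro conjI)
  show "group RG" by (rule group_RG)
  show generated: "generate RG {f \<in> carrier RG. small_support f} = carrier RG"
    using RG.generate_incl[of "{f \<in> carrier RG. small_support f}"] RG_generated_by_small_support
    by blast
  have "generate RG {f \<in> carrier RG. small_support f} \<subseteq> derived RG (carrier RG)"
    by (rule RG.generate_subgroup_incl) (auto intro: small_support_derived RG.derived_is_subgroup)
  then show "derived RG (carrier RG) = carrier RG"
    using generated RG.derived_in_carrier[of "carrier RG"] by auto
qed

end
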